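(* Let $\{w^k\}$ be generated by the L-GADMM iteration and $\{\bar w^k\}$ be the auxiliary sequence. Then for every $k\ge0$, $$(w^k-\bar w^k)^\top M^\top HM\big\{(w^k-\bar w^k)-(w^{k+1}-\bar w^{k+1})\big\}\ \ge\ \tfrac12\big\|(w^k-\bar w^k)-(w^{k+1}-\bar w^{k+1})\big\|_{Q^\top+Q}^2.$$
   Context: Standing setting. Let $m\ge 2$, $\ell$, $n_1,\dots,n_m$ be positive integers. For $i=1,\dots,m$ let $\theta_i:\mathbb{R}^{n_i}\to\mathbb{R}$ be convex, $\mathcal{X}_i\subseteq\mathbb{R}^{n_i}$ nonempty closed convex, $A_i\in\mathbb{R}^{\ell\times n_i}$ of full column rank, and $b\in\mathbb{R}^\ell$. Problem (P): $\min\{\sum_{i=1}^m\theta_i(x_i):\sum_{i=1}^mA_ix_i=b,\ x_i\in\mathcal{X}_i\}$, assumed to have a nonempty solution set. Write $u=(x_1,\dots,x_m)$, $w=(x_1,\dots,x_m,y)$ with $y\in\mathbb{R}^\ell$, $\theta(u)=\sum_i\theta_i(x_i)$, $F(w)=(-A_1^\top y,\dots,-A_m^\top y,\ \sum_iA_ix_i-b)$, $\mathcal{W}=\mathcal{X}_1\times\cdots\times\mathcal{X}_m\times\mathbb{R}^\ell$, and $\mathcal{W}^*=\{w^*\in\mathcal{W}:\theta(u)-\theta(u^* )+(w-w^* )^\top F(w^* )\ge0\ \forall w\in\mathcal{W}\}$ (nonempty). For symmetric $G$, $\|v\|_G^2:=v^\top Gv$; $\|\cdot\|$ is the Euclidean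 norm. Vectors are partitioned as $w=(R,x_m,y)$ with $R=(x_1,\dots,x_{m-1})$. Parameters: $\rho>0$, $\gamma\in(0,2)$, symmetric positive definite $P_i\in\mathbb{R}^{n_i\times n_i}$ ($i=1,\dots,m$) such that $G_1\succ0$, where $G_1$ is the symmetric block matrix with diagonal blocks $P_1,\dots,P_{m-1}$ and $(i,j)$ block $-\rho A_i^\top A_j$ for $i\ne j$, $1\le i,j\le m-1$. Matrices (w.r.t. the partition $(R,x_m,y)$): $Q=\begin{pmatrix}G_1&0&0\\0&\rho A_m^\top A_m+P_m&(1-\gamma)A_m^\top\\0&-A_m&\frac1\rho I_\ell\end{pmatrix}$, $M=\begin{pmatrix}I&0&0\\0&I_{n_m}&0\\0&-\rho A_m&\gamma I_\ell\end{pmatrix}$, $H=\begin{pmatrix}G_1&0&0\\0&P_m+\frac\rho\gamma A_m^\top A_m&\frac{1-\gamma}\gamma A_m^\top\\0&\frac{1-\gamma}\gamma A_m&\frac1{\gamma\rho}I_\ell\end{pmatrix}$, $N=Q^\top+Q-M^\top HM$. L-GADMM iteration: from an arbitrary $w^0=(x_1^0,\dots,x_m^0,y^0)\in\mathcal{W}$, for $k=0,1,2,\dots$: $x_j^{k+1}=\arg\min_{x_j\in\mathcal{X}_j}\{\theta_j(x_j)+\frac\rho2\|A_jx_j+\sum_{i=1,i\ne j}^mA_ix_i^k-b-\frac{y^k}\rho\|^2+\frac12\|x_j-x_j^k\|_{P_j}^2\}$ for $j=1,\dots,m-1$; $x_m^{k+1}=\arg\min_{x_m\in\mathcal{X}_m}\{\theta_m(x_m)+\frac\rho2\|\gamma\sum_{i=1}^{m-1}A_ix_i^{k+1}+(1-\gamma)(b-A_mx_m^k)+A_mx_m-b-\frac{y^k}\rho\|^2+\frac12\|x_m-x_m^k\|_{P_m}^2\}$;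 $y^{k+1}=y^k-\rho\big(\gamma\sum_{i=1}^{m-1}A_ix_i^{k+1}+(1-\gamma)(b-A_mx_m^k)+A_mx_m^{k+1}-b\big)$. Auxiliary sequence: $\bar w^k=(\bar x_1^k,\dots,\bar x_m^k,\bar y^k)$ with $\bar x_i^k=x_i^{k+1}$ ($i=1,\dots,m$) and $\bar y^k=y^k-\rho(\sum_{i=1}^{m-1}A_ix_i^{k+1}+A_mx_m^k-b)$; $\bar u^k=(\bar x_1^k,\dots,\bar x_m^k)$, $R^k=(x_1^k,\dots,x_{m-1}^k)$, $\bar R^k=(\bar x_1^k,\dots,\bar x_{m-1}^k)$. *)

theory Defs
  imports Complex_Main "Jordan_Normal_Form.DL_Rank"
begin

(* Block offsets: block i (0-based) of a vector/matrix with block sizes d occupies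
   the index range [offs d i, offs d i + d i). *)
definition offs :: "(nat \<Rightarrow> nat) \<Rightarrow> nat \<Rightarrow> nat" where
  "offs d i = (\<Sum>j<i. d j)"

definition blk :: "(nat \<Rightarrow> nat) \<Rightarrow> nat \<Rightarrow> nat" where
  "blk d r = (LEAST i. r < offs d (Suc i))"

definition block_mat :: "(nat \<Rightarrow> nat) \<Rightarrow> nat \<Rightarrow> (nat \<Rightarrow> nat \<Rightarrow> real mat) \<Rightarrow> real mat" where
  "block_mat d p B = mat (offs d p) (offs d p)
     (\<lambda>(r, c). B (blk d r) (blk d c) $$ (r - offs d (blk d r), c - offs d (blk d c)))"

definition stack_vec :: "(nat \<Rightarrow> nat) \<Rightarrow> nat \<Rightarrow> (nat \<Rightarrow> real vec) \<Rightarrow> real vec" where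
  "stack_vec d p v = vec (offs d p) (\<lambda>r. v (blk d r) $ (r - offs d (blk d r)))"

definition vsum :: "nat \<Rightarrow> (nat \<Rightarrow> real vec) \<Rightarrow> nat set \<Rightarrow> real vec" where
  "vsum l f I = vec l (\<lambda>r. \<Sum>i\<in>I. f i $ r)"

definition qnorm :: "real mat \<Rightarrow> real vec \<Rightarrow> real" where
  "qnorm G v = v \<bullet> (G *\<^sub>v v)"

definition sqnorm :: "real vec \<Rightarrow> real" where
  "sqnorm v = v \<bullet> v"

definition sym_pos_def :: "nat \<Rightarrow> real mat \<Rightarrow> bool" where
  "sym_pos_def n G \<longleftrightarrow> G \<in> carrier_mat n n \<and> transpose_mat G = G \<and>
     (\<forall>v\<in>carrier_vec n. v \<noteq> 0\<^sub>v n \<longrightarrow> v \<bullet> (G *\<^sub>v v) > 0)"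

definition convex_fun_vec :: "nat \<Rightarrow> (real vec \<Rightarrow> real) \<Rightarrow> bool" where
  "convex_fun_vec n f \<longleftrightarrow> (\<forall>x\<in>carrier_vec n. \<forall>y\<in>carrier_vec n. \<forall>t::real. 0 \<le> t \<and> t \<le> 1 \<longrightarrow>
     f (t \<cdot>\<^sub>v x + (1 - t) \<cdot>\<^sub>v y) \<le> t * f x + (1 - t) * f y)"

definition convex_set_vec :: "nat \<Rightarrow> real vec set \<Rightarrow> bool" where
  "convex_set_vec n X \<longleftrightarrow> X \<subseteq> carrier_vec n \<and> (\<forall>x\<in>X. \<forall>y\<in>X. \<forall>t::real. 0 \<le> t \<and> t \<le> 1 \<longrightarrow>
     t \<cdot>\<^sub>v x + (1 - t) \<cdot>\<^sub>v y \<in> X)"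

definition closed_set_vec :: "nat \<Rightarrow> real vec set \<Rightarrow> bool" where
  "closed_set_vec n X \<longleftrightarrow> X \<subseteq> carrier_vec n \<and> (\<forall>s x. (\<forall>k. s k \<in> X) \<and> x \<in> carrier_vec n \<and>
     (\<forall>r<n. (\<lambda>k. s k $ r) \<longlonglongrightarrow> x $ r) \<longrightarrow> x \<in> X)"

end

theory Submission
  imports Defs
begin

text \<open>Write \<Delta> = (w^k - wbar^k) - (w^(k+1) - wbar^(k+1)). The matrices satisfy H M = Q on
  block vectors, and M (w^k - wbar^k) = w^k - w^(k+1) by the dual update, so the left-hand side equals
  (w^k - w^(k+1))^T Q \<Delta> = \<Delta>^T Q \<Delta> + (wbar^k - wbar^(k+1))^T Q \<Delta>, where \<Delta>^T Q \<Delta> is half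
  the quadratic form of Q^T + Q. The cross term is nonnegative: every primal update minimises a
  convex proximal subproblem, so its first-order optimality condition holds at steps k and k + 1;
  adding the two conditions cancels the objective values, and the coupling through the dual
  variable cancels after summing over the blocks.\<close>

section \<open>Block vectors and block matrices\<close>

lemma offs_0 [simp]: "offs d 0 = 0"
  by (simp add: offs_def)

lemma offs_Suc: "offs d (Suc i) = offs d i + d i"
  by (simp add: offs_def)

lemma offs_mono: "i \<le> j \<Longrightarrow> offs d i \<le> offs d j"
  unfolding offs_def by (rule sum_mono2) auto

lemma blk_bounds:
  assumes r: "r < offs d p"
  shows "blk d r < p" "offs d (blk d r) \<le> r" "r < offs d (blk d r) + d (blk d r)"
proof -
  have p: "p > 0" using r by (cases p) auto
  have ex: "r < offs d (Suc (p - 1))" using r p by simp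
  have "blk d r \<le> p - 1" unfolding blk_def by (rule Least_le) (rule ex)
  then show "blk d r < p" using p by simp
  have "r < offs d (Suc (blk d r))" unfolding blk_def by (rule LeastI) (rule ex)
  then show "r < offs d (blk d r) + d (blk d r)" by (simp add: offs_Suc)
  show "offs d (blk d r) \<le> r"
  proof (cases "blk d r")
    case (Suc j)
    have "\<not> r < offs d (Suc j)"
    proof
      assume "r < offs d (Suc j)"
      then have "blk d r \<le> j" unfolding blk_def by (rule Least_le)
      then show False using Suc by simp
    qed
    then show ?thesis using Suc by simp
  qed simp
qed

lemma blk_offs_add: "s < d i \<Longrightarrow> blk d (offs d i + s) = i"
  unfolding blk_def
proof (rule Least_equality)
  fix j assume j: "offs d i + s < offs d (Suc j)"
  show "i \<le> j"
  proof (rule ccontr)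
    assume "\<not> i \<le> j"
    then have "offs d (Suc j) \<le> offs d i" by (intro offs_mono) simp
    then show False using j by simp
  qed
qed (simp add: offs_Suc)

lemma sum_lessThan_add: "(\<Sum>r<a + (b::nat). f r) = (\<Sum>r<a. f r) + (\<Sum>s<b. f (a + s))"
  by (induction b) (auto simp: add.assoc)

lemma sum_lessThan_offs:
  "(\<Sum>r<offs d p. g (blk d r) (r - offs d (blk d r))) = (\<Sum>i<p. \<Sum>s<d i. g i s)"
proof (induction p)
  case (Suc p)
  have "(\<Sum>s<d p. g (blk d (offs d p + s)) (offs d p + s - offs d (blk d (offs d p + s))))
      = (\<Sum>s<d p. g p s)"
    by (rule sum.cong) (auto simp: blk_offs_add)
  then show ?case using Suc by (simp add: offs_Suc sum_lessThan_add)
qed simp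

lemma dim_stack_vec [simp]: "dim_vec (stack_vec d p v) = offs d p"
  by (simp add: stack_vec_def)

lemma stack_vec_carrier [simp]: "stack_vec d p v \<in> carrier_vec (offs d p)"
  by (rule carrier_vecI) simp

lemma index_stack_vec:
  "r < offs d p \<Longrightarrow> stack_vec d p v $ r = v (blk d r) $ (r - offs d (blk d r))"
  by (simp add: stack_vec_def)

lemma stack_vec_cong: "(\<And>i. i < p \<Longrightarrow> v i = w i) \<Longrightarrow> stack_vec d p v = stack_vec d p w"
  unfolding stack_vec_def by (intro eq_vecI) (auto dest: blk_bounds)

lemma scalar_prod_stack_vec:
  assumes "\<And>i. i < p \<Longrightarrow> w i \<in> carrier_vec (d i)"
  shows "stack_vec d p v \<bullet> stack_vec d p w = (\<Sum>i<p. v i \<bullet> w i)"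
proof -
  have "stack_vec d p v \<bullet> stack_vec d p w = (\<Sum>r<offs d p. stack_vec d p v $ r * stack_vec d p w $ r)"
    by (simp add: scalar_prod_def atLeast0LessThan)
  also have "\<dots> = (\<Sum>r<offs d p. (\<lambda>i s. v i $ s * w i $ s) (blk d r) (r - offs d (blk d r)))"
    by (rule sum.cong) (auto simp: index_stack_vec)
  also have "\<dots> = (\<Sum>i<p. \<Sum>s<d i. v i $ s * w i $ s)"
    by (rule sum_lessThan_offs)
  also have "\<dots> = (\<Sum>i<p. v i \<bullet> w i)"
    using assms[THEN carrier_vecD] by (intro sum.cong) (auto simp: scalar_prod_def atLeast0LessThan)
  finally show ?thesis .
qed

lemma stack_vec_minus:
  assumes "\<And>i. i < p \<Longrightarrow> v i \<in> carrier_vec (d i)" "\<And>i. i < p \<Longrightarrow> w i \<in> carrier_vec (d i)"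
  shows "stack_vec d p v - stack_vec d p w = stack_vec d p (\<lambda>i. v i - w i)"
proof (rule eq_vecI)
  fix r assume "r < dim_vec (stack_vec d p (\<lambda>i. v i - w i))"
  then have r: "r < offs d p" by simp
  then have "w (blk d r) \<in> carrier_vec (d (blk d r))" "r - offs d (blk d r) < d (blk d r)"
    using assms(2) blk_bounds[OF r] by auto
  then show "(stack_vec d p v - stack_vec d p w) $ r = stack_vec d p (\<lambda>i. v i - w i) $ r"
    using r by (simp add: index_stack_vec)
qed simp

lemma index_mult_mat_vec_sum:
  "A \<in> carrier_mat nr nc \<Longrightarrow> v \<in> carrier_vec nc \<Longrightarrow> i < nr \<Longrightarrow>
    (A *\<^sub>v v) $ i = (\<Sum>c<nc. A $$ (i, c) * v $ c)"
  by (auto simp: scalar_prod_def atLeast0LessThan intro!: sum.cong)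

lemma block_mat_carrier [simp]: "block_mat d p B \<in> carrier_mat (offs d p) (offs d p)"
  by (simp add: block_mat_def)

lemma block_mat_mult_stack_vec:
  assumes B: "\<And>i j. i < p \<Longrightarrow> j < p \<Longrightarrow> B i j \<in> carrier_mat (d i) (d j)"
    and v: "\<And>j. j < p \<Longrightarrow> v j \<in> carrier_vec (d j)"
    and u: "\<And>i s. i < p \<Longrightarrow> s < d i \<Longrightarrow> u i $ s = (\<Sum>j<p. (B i j *\<^sub>v v j) $ s)"
  shows "block_mat d p B *\<^sub>v stack_vec d p v = stack_vec d p u"
proof (rule eq_vecI)
  fix r assume "r < dim_vec (stack_vec d p u)"
  then have r: "r < offs d p" by simp
  define i where "i = blk d r"
  define s where "s = r - offs d i"
  have i: "i < p" and s: "s < d i" using blk_bounds[OF r] unfolding i_def s_def by linarith+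
  have "(block_mat d p B *\<^sub>v stack_vec d p v) $ r
      = (\<Sum>c<offs d p. block_mat d p B $$ (r, c) * stack_vec d p v $ c)"
    by (rule index_mult_mat_vec_sum[OF block_mat_carrier stack_vec_carrier r])
  also have "\<dots> = (\<Sum>c<offs d p. (\<lambda>j s'. B i j $$ (s, s') * v j $ s') (blk d c) (c - offs d (blk d c)))"
    using r by (intro sum.cong) (auto simp: block_mat_def index_stack_vec i_def s_def)
  also have "\<dots> = (\<Sum>j<p. \<Sum>s'<d j. B i j $$ (s, s') * v j $ s')"
    by (rule sum_lessThan_offs)
  also have "\<dots> = (\<Sum>j<p. (B i j *\<^sub>v v j) $ s)"
    by (rule sum.cong) (auto simp: index_mult_mat_vec_sum[OF B[OF i] v s])
  finally show "(block_mat d p B *\<^sub>v stack_vec d p v) $ r = stack_vec d p u $ r"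
    using u[OF i s] r by (simp add: index_stack_vec i_def s_def)
qed (simp add: block_mat_def)

lemma dim_vsum [simp]: "dim_vec (vsum l f I) = l"
  by (simp add: vsum_def)

lemma vsum_carrier [simp]: "vsum l f I \<in> carrier_vec l"
  by (rule carrier_vecI) simp

lemma index_vsum: "r < l \<Longrightarrow> vsum l f I $ r = (\<Sum>i\<in>I. f i $ r)"
  unfolding vsum_def by simp

lemma index_mult_mat_vec_vsum:
  assumes M: "M \<in> carrier_mat nr l" and f: "\<And>i. i \<in> I \<Longrightarrow> f i \<in> carrier_vec l" and s: "s < nr"
  shows "(M *\<^sub>v vsum l f I) $ s = (\<Sum>i\<in>I. (M *\<^sub>v f i) $ s)"
proof -
  have "(M *\<^sub>v vsum l f I) $ s = (\<Sum>i\<in>I. \<Sum>c<l. M $$ (s, c) * f i $ c)"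
    by (simp add: index_mult_mat_vec_sum[OF M vsum_carrier s] index_vsum sum_distrib_left
        sum.swap[of _ I])
  also have "\<dots> = (\<Sum>i\<in>I. (M *\<^sub>v f i) $ s)"
    by (rule sum.cong) (simp_all add: index_mult_mat_vec_sum[OF M f s])
  finally show ?thesis .
qed

lemma scalar_prod_vsum:
  assumes w: "w \<in> carrier_vec l" and f: "\<And>i. i \<in> I \<Longrightarrow> f i \<in> carrier_vec l"
  shows "w \<bullet> vsum l f I = (\<Sum>i\<in>I. w \<bullet> f i)"
proof -
  have "w \<bullet> vsum l f I = (\<Sum>i\<in>I. \<Sum>r<l. w $ r * f i $ r)"
    using w by (simp add: scalar_prod_def atLeast0LessThan vsum_def sum_distrib_left sum.swap[of _ I])
  also have "\<dots> = (\<Sum>i\<in>I. w \<bullet> f i)"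
    using f[THEN carrier_vecD] by (intro sum.cong) (auto simp: scalar_prod_def atLeast0LessThan)
  finally show ?thesis .
qed

lemma vsum_reindex: "inj_on g S \<Longrightarrow> vsum l f (g ` S) = vsum l (\<lambda>i. f (g i)) S"
  by (simp add: vsum_def sum.reindex)

lemma smult_mat_mult_vec:
  "M \<in> carrier_mat nr nc \<Longrightarrow> v \<in> carrier_vec nc \<Longrightarrow> (a \<cdot>\<^sub>m M) *\<^sub>v v = a \<cdot>\<^sub>v (M *\<^sub>v v :: real vec)"
  by (intro eq_vecI) (auto simp: scalar_prod_def sum_distrib_left mult.assoc)

lemma zero_mat_mult_vec: "v \<in> carrier_vec nc \<Longrightarrow> 0\<^sub>m nr nc *\<^sub>v v = (0\<^sub>v nr :: real vec)"
  by (intro eq_vecI) (auto simp: scalar_prod_def)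

lemma scalar_prod_transpose_mult_vec:
  fixes A :: "real mat"
  assumes A: "A \<in> carrier_mat nr nc" and h: "h \<in> carrier_vec nc" and z: "z \<in> carrier_vec nr"
  shows "h \<bullet> (transpose_mat A *\<^sub>v z) = (A *\<^sub>v h) \<bullet> z"
proof -
  have "h \<bullet> (transpose_mat A *\<^sub>v z) = (transpose_mat A *\<^sub>v z) \<bullet> h"
    by (rule comm_scalar_prod[OF h]) (use A z in simp)
  also have "\<dots> = z \<bullet> (A *\<^sub>v h)" by (rule transpose_vec_mult_scalar[OF A h z])
  also have "\<dots> = (A *\<^sub>v h) \<bullet> z" by (rule comm_scalar_prod[OF z]) (use A h in simp)
  finally show ?thesis .
qed

lemma block_mat_gram_mult_stack_vec:
  fixes c :: real
  assumes D: "\<And>i. i < p \<Longrightarrow> D i \<in> carrier_mat (d i) (d i)"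
    and B: "\<And>i. i < p \<Longrightarrow> B i \<in> carrier_mat l (d i)"
    and v: "\<And>i. i < p \<Longrightarrow> v i \<in> carrier_vec (d i)"
  shows "block_mat d p (\<lambda>i j. if i = j then D i else c \<cdot>\<^sub>m (transpose_mat (B i) * B j)) *\<^sub>v stack_vec d p v
    = stack_vec d p (\<lambda>i. D i *\<^sub>v v i
        + c \<cdot>\<^sub>v (transpose_mat (B i) *\<^sub>v vsum l (\<lambda>j. B j *\<^sub>v v j) ({..<p} - {i})))"
proof (rule block_mat_mult_stack_vec[OF _ v])
  fix i j assume "i < p" "j < p"
  then show "(if i = j then D i else c \<cdot>\<^sub>m (transpose_mat (B i) * B j)) \<in> carrier_mat (d i) (d j)"
    using D[of i] B[of i] B[of j] by (cases "i = j") auto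
next
  fix i s assume i: "i < p" and s: "s < d i"
  have Bt: "transpose_mat (B i) \<in> carrier_mat (d i) l" using B[OF i] by simp
  have off: "((c \<cdot>\<^sub>m (transpose_mat (B i) * B j)) *\<^sub>v v j) $ s
      = c * (transpose_mat (B i) *\<^sub>v (B j *\<^sub>v v j)) $ s" if j: "j < p" for j
    using smult_mat_mult_vec[OF mult_carrier_mat[OF Bt B[OF j]] v[OF j]] Bt B[OF j] v[OF j] s
    by simp
  have "(\<Sum>j<p. ((if i = j then D i else c \<cdot>\<^sub>m (transpose_mat (B i) * B j)) *\<^sub>v v j) $ s)
      = (D i *\<^sub>v v i) $ s + (\<Sum>j\<in>{..<p} - {i}. c * (transpose_mat (B i) *\<^sub>v (B j *\<^sub>v v j)) $ s)"
    using i by (simp add: sum.remove[of _ i] off)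
  also have "\<dots> = (D i *\<^sub>v v i) $ s + c * (transpose_mat (B i) *\<^sub>v vsum l (\<lambda>j. B j *\<^sub>v v j) ({..<p} - {i})) $ s"
  proof -
    have "(transpose_mat (B i) *\<^sub>v vsum l (\<lambda>j. B j *\<^sub>v v j) ({..<p} - {i})) $ s
        = (\<Sum>j\<in>{..<p} - {i}. (transpose_mat (B i) *\<^sub>v (B j *\<^sub>v v j)) $ s)"
      by (rule index_mult_mat_vec_vsum[OF Bt _ s]) (auto intro: mult_mat_vec_carrier[OF B v])
    then show ?thesis by (simp add: sum_distrib_left)
  qed
  also have "\<dots> = (D i *\<^sub>v v i + c \<cdot>\<^sub>v (transpose_mat (B i) *\<^sub>v vsum l (\<lambda>j. B j *\<^sub>v v j) ({..<p} - {i}))) $ s"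
    using D[OF i] Bt s by simp
  finally show "(D i *\<^sub>v v i + c \<cdot>\<^sub>v (transpose_mat (B i) *\<^sub>v vsum l (\<lambda>j. B j *\<^sub>v v j) ({..<p} - {i}))) $ s
      = (\<Sum>j<p. ((if i = j then D i else c \<cdot>\<^sub>m (transpose_mat (B i) * B j)) *\<^sub>v v j) $ s)"
    by simp
qed

definition stack3 :: "(nat \<Rightarrow> nat) \<Rightarrow> real vec \<Rightarrow> real vec \<Rightarrow> real vec \<Rightarrow> real vec" where
  "stack3 d a b c = stack_vec d 3 (\<lambda>t. if t = 0 then a else if t = 1 then b else c)"

lemma dim_stack3 [simp]: "dim_vec (stack3 d a b c) = offs d 3"
  by (simp add: stack3_def)

lemma stack3_carrier [simp]: "stack3 d a b c \<in> carrier_vec (offs d 3)"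
  by (simp add: stack3_def)

lemma less_3_cases: "i < (3::nat) \<Longrightarrow> i = 0 \<or> i = 1 \<or> i = 2"
  by auto

lemma sum_lessThan_3: "(\<Sum>j<(3::nat). f j) = f 0 + f 1 + (f 2 :: 'a :: comm_monoid_add)"
  by (simp add: eval_nat_numeral add.assoc)

lemma scalar_prod_stack3:
  assumes "a' \<in> carrier_vec (d 0)" "b' \<in> carrier_vec (d 1)" "c' \<in> carrier_vec (d 2)"
  shows "stack3 d a b c \<bullet> stack3 d a' b' c' = a \<bullet> a' + b \<bullet> b' + c \<bullet> c'"
  unfolding stack3_def
  by (subst scalar_prod_stack_vec) (use assms less_3_cases in \<open>auto simp: sum_lessThan_3\<close>)

lemma stack3_minus:
  assumes "a \<in> carrier_vec (d 0)" "b \<in> carrier_vec (d 1)" "c \<in> carrier_vec (d 2)"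
    "a' \<in> carrier_vec (d 0)" "b' \<in> carrier_vec (d 1)" "c' \<in> carrier_vec (d 2)"
  shows "stack3 d a b c - stack3 d a' b' c' = stack3 d (a - a') (b - b') (c - c')"
  unfolding stack3_def
  by (subst stack_vec_minus) (use assms less_3_cases in \<open>auto intro!: stack_vec_cong\<close>)

lemma block_mat3_mult_stack3:
  assumes B: "\<And>i j. i < 3 \<Longrightarrow> j < 3 \<Longrightarrow> B i j \<in> carrier_mat (d i) (d j)"
    and a: "a \<in> carrier_vec (d 0)" and b: "b \<in> carrier_vec (d 1)" and c: "c \<in> carrier_vec (d 2)"
  shows "block_mat d 3 B *\<^sub>v stack3 d a b c
     = stack3 d (B 0 0 *\<^sub>v a + B 0 1 *\<^sub>v b + B 0 2 *\<^sub>v c)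
                (B 1 0 *\<^sub>v a + B 1 1 *\<^sub>v b + B 1 2 *\<^sub>v c)
                (B 2 0 *\<^sub>v a + B 2 1 *\<^sub>v b + B 2 2 *\<^sub>v c)"
proof -
  let ?u = "\<lambda>i. B i 0 *\<^sub>v a + B i 1 *\<^sub>v b + B i 2 *\<^sub>v c"
  have "block_mat d 3 B *\<^sub>v stack3 d a b c = stack_vec d 3 ?u"
    unfolding stack3_def
  proof (rule block_mat_mult_stack_vec[OF B])
    fix i s assume "i < 3" "s < d i"
    then show "?u i $ s = (\<Sum>j<3. (B i j *\<^sub>v (if j = 0 then a else if j = 1 then b else c)) $ s)"
      using B[of i 0] B[of i 1] B[of i 2] a b c by (simp add: sum_lessThan_3)
  qed (use a b c less_3_cases in auto)
  also have "\<dots> = stack3 d (?u 0) (?u 1) (?u 2)"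
    unfolding stack3_def by (rule stack_vec_cong) (use less_3_cases in auto)
  finally show ?thesis .
qed

lemma scalar_prod_MtHM_ge_half_qnorm:
  fixes Q M H :: "real mat"
  assumes Q: "Q \<in> carrier_mat N N" and M: "M \<in> carrier_mat N N" and H: "H \<in> carrier_mat N N"
    and d: "d \<in> carrier_vec N" and \<Delta>: "\<Delta> \<in> carrier_vec N"
    and HMQ: "H *\<^sub>v (M *\<^sub>v \<Delta>) = Q *\<^sub>v \<Delta>"
    and cross: "(M *\<^sub>v d - \<Delta>) \<bullet> (Q *\<^sub>v \<Delta>) \<ge> 0"
  shows "d \<bullet> ((transpose_mat M * H * M) *\<^sub>v \<Delta>) \<ge> 1 / 2 * qnorm (transpose_mat Q + Q) \<Delta>"
proof -
  have QD: "Q *\<^sub>v \<Delta> \<in> carrier_vec N" using Q \<Delta> by simp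
  have "(transpose_mat M * H * M) *\<^sub>v \<Delta> = transpose_mat M *\<^sub>v (Q *\<^sub>v \<Delta>)"
    using M H \<Delta> HMQ by (simp add: assoc_mult_mat_vec[of _ N N _ N])
  then have "d \<bullet> ((transpose_mat M * H * M) *\<^sub>v \<Delta>) = (M *\<^sub>v d) \<bullet> (Q *\<^sub>v \<Delta>)"
    using scalar_prod_transpose_mult_vec[OF M d QD] by simp
  also have "\<dots> = \<Delta> \<bullet> (Q *\<^sub>v \<Delta>) + (M *\<^sub>v d - \<Delta>) \<bullet> (Q *\<^sub>v \<Delta>)"
    using M d \<Delta> QD by (simp add: minus_scalar_prod_distrib[of _ N])
  finally have lhs: "d \<bullet> ((transpose_mat M * H * M) *\<^sub>v \<Delta>) = \<Delta> \<bullet> (Q *\<^sub>v \<Delta>) + (M *\<^sub>v d - \<Delta>) \<bullet> (Q *\<^sub>v \<Delta>)" .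
  have "qnorm (transpose_mat Q + Q) \<Delta> = \<Delta> \<bullet> (transpose_mat Q *\<^sub>v \<Delta>) + \<Delta> \<bullet> (Q *\<^sub>v \<Delta>)"
    unfolding qnorm_def using Q \<Delta>
    by (simp add: add_mult_distrib_mat_vec[of _ N N] scalar_prod_add_distrib[of _ N])
  also have "\<Delta> \<bullet> (transpose_mat Q *\<^sub>v \<Delta>) = \<Delta> \<bullet> (Q *\<^sub>v \<Delta>)"
    using scalar_prod_transpose_mult_vec[OF Q \<Delta> \<Delta>] comm_scalar_prod[OF QD \<Delta>] by simp
  finally show ?thesis using lhs cross by simp
qed

section \<open>Proximal subproblems\<close>

lemma sqnorm_add_smult:
  assumes u: "u \<in> carrier_vec l" and g: "g \<in> carrier_vec l"
  shows "sqnorm (u + t \<cdot>\<^sub>v g) = sqnorm u + 2 * t * (g \<bullet> u) + t\<^sup>2 * sqnorm g"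
  using u g comm_scalar_prod[OF u g]
  by (simp add: sqnorm_def add_scalar_prod_distrib[of _ l] scalar_prod_add_distrib[of _ l]
      power2_eq_square algebra_simps)

lemma qnorm_add_smult:
  fixes P :: "real mat"
  assumes P: "P \<in> carrier_mat n n" "transpose_mat P = P"
    and q: "q \<in> carrier_vec n" and h: "h \<in> carrier_vec n"
  shows "qnorm P (q + t \<cdot>\<^sub>v h) = qnorm P q + 2 * t * (h \<bullet> (P *\<^sub>v q)) + t\<^sup>2 * qnorm P h"
proof -
  have sym: "q \<bullet> (P *\<^sub>v h) = h \<bullet> (P *\<^sub>v q)"
    using scalar_prod_transpose_mult_vec[OF P(1) q h] comm_scalar_prod[OF _ h, of "P *\<^sub>v q"] P q
    by simp
  have "P *\<^sub>v (q + t \<cdot>\<^sub>v h) = P *\<^sub>v q + t \<cdot>\<^sub>v (P *\<^sub>v h)"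
    using P q h by (simp add: mult_add_distrib_mat_vec[OF P(1)] mult_mat_vec[OF P(1)])
  then show ?thesis
    unfolding qnorm_def using P q h sym
    by (simp add: add_scalar_prod_distrib[of _ n] scalar_prod_add_distrib[of _ n]
        power2_eq_square algebra_simps)
qed

definition prox_argmin ::
  "real \<Rightarrow> (real vec \<Rightarrow> real) \<Rightarrow> real vec set \<Rightarrow> real mat \<Rightarrow> real vec \<Rightarrow> real mat \<Rightarrow> real vec \<Rightarrow> real vec \<Rightarrow> bool"
where
  "prox_argmin \<rho> f X A c P x0 z \<longleftrightarrow> z \<in> X \<and>
     (\<forall>z'\<in>X. f z + \<rho> / 2 * sqnorm (A *\<^sub>v z + c) + 1 / 2 * qnorm P (z - x0)
            \<le> f z' + \<rho> / 2 * sqnorm (A *\<^sub>v z' + c) + 1 / 2 * qnorm P (z' - x0))"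

lemma nonneg_if_nonneg_near_zero:
  fixes L K :: real
  assumes "\<And>t. 0 < t \<Longrightarrow> t \<le> 1 \<Longrightarrow> 0 \<le> t * L + t\<^sup>2 * K"
  shows "0 \<le> L"
proof (rule ccontr)
  assume "\<not> 0 \<le> L"
  then have L: "L < 0" by simp
  define t where "t = min 1 (- L / (2 * (\<bar>K\<bar> + 1)))"
  have t: "0 < t" "t \<le> 1" using L unfolding t_def by (auto simp: field_simps)
  have "t \<le> - L / (2 * (\<bar>K\<bar> + 1))" unfolding t_def by simp
  then have "t * (\<bar>K\<bar> + 1) \<le> - L / 2" by (simp add: field_simps)
  then have "t * K \<le> - L / 2" using t by (smt (verit) mult_left_mono abs_ge_self)
  then have "t * (L + t * K) < 0" using L t by (simp add: mult_pos_neg)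
  then show False using assms[OF t] by (simp add: power2_eq_square algebra_simps)
qed

text \<open>Compare the minimiser with the points of the segment towards z and let them tend to the
  minimiser.\<close>

lemma prox_argmin_variational_ineq:
  fixes f :: "real vec \<Rightarrow> real"
  assumes min: "prox_argmin \<rho> f X A c P x0 xs" and z: "z \<in> X"
    and f: "convex_fun_vec n f" and X: "convex_set_vec n X"
    and A: "A \<in> carrier_mat l n" and c: "c \<in> carrier_vec l"
    and P: "P \<in> carrier_mat n n" "transpose_mat P = P" and x0: "x0 \<in> carrier_vec n"
  shows "f z - f xs + \<rho> * ((A *\<^sub>v (z - xs)) \<bullet> (A *\<^sub>v xs + c)) + (z - xs) \<bullet> (P *\<^sub>v (xs - x0)) \<ge> 0"
proof -
  have xs: "xs \<in> X" using min unfolding prox_argmin_def by blast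
  have xsc: "xs \<in> carrier_vec n" and zc: "z \<in> carrier_vec n"
    using X xs z unfolding convex_set_vec_def by auto
  define h where "h = z - xs"
  define u where "u = A *\<^sub>v xs + c"
  define g where "g = A *\<^sub>v h"
  define q where "q = xs - x0"
  have hc: "h \<in> carrier_vec n" and uc: "u \<in> carrier_vec l" and gc: "g \<in> carrier_vec l"
    and qc: "q \<in> carrier_vec n"
    unfolding h_def u_def g_def q_def using zc xsc A c x0 by auto
  define L where "L = f z - f xs + \<rho> * (g \<bullet> u) + h \<bullet> (P *\<^sub>v q)"
  define K where "K = \<rho> / 2 * sqnorm g + 1 / 2 * qnorm P h"
  have "0 \<le> t * L + t\<^sup>2 * K" if t: "0 < t" "t \<le> 1" for t
  proof -
    define zt where "zt = t \<cdot>\<^sub>v z + (1 - t) \<cdot>\<^sub>v xs"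
    have "zt \<in> X" using X xs z t unfolding convex_set_vec_def zt_def by simp
    then have opt: "f xs + \<rho> / 2 * sqnorm u + 1 / 2 * qnorm P q
        \<le> f zt + \<rho> / 2 * sqnorm (A *\<^sub>v zt + c) + 1 / 2 * qnorm P (zt - x0)"
      using min unfolding prox_argmin_def u_def q_def by blast
    have conv: "f zt \<le> t * f z + (1 - t) * f xs"
      using f zc xsc t unfolding convex_fun_vec_def zt_def by simp
    have zt: "zt = xs + t \<cdot>\<^sub>v h"
      unfolding zt_def h_def using zc xsc by (intro eq_vecI) (auto simp: algebra_simps)
    have "A *\<^sub>v zt + c = u + t \<cdot>\<^sub>v g"
      unfolding zt u_def g_def using A xsc hc c
      by (intro eq_vecI) (auto simp: mult_add_distrib_mat_vec[OF A] mult_mat_vec[OF A])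
    then have S: "sqnorm (A *\<^sub>v zt + c) = sqnorm u + 2 * t * (g \<bullet> u) + t\<^sup>2 * sqnorm g"
      using sqnorm_add_smult[OF uc gc] by simp
    have "zt - x0 = q + t \<cdot>\<^sub>v h"
      unfolding zt q_def using xsc x0 hc by (intro eq_vecI) auto
    then have R: "qnorm P (zt - x0) = qnorm P q + 2 * t * (h \<bullet> (P *\<^sub>v q)) + t\<^sup>2 * qnorm P h"
      using qnorm_add_smult[OF P qc hc] by simp
    have "t * L + t\<^sup>2 * K = t * f z + (1 - t) * f xs - f xs
        + \<rho> / 2 * (2 * t * (g \<bullet> u) + t\<^sup>2 * sqnorm g) + 1 / 2 * (2 * t * (h \<bullet> (P *\<^sub>v q)) + t\<^sup>2 * qnorm P h)"
      unfolding L_def K_def by (simp add: algebra_simps)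
    then show ?thesis using opt conv unfolding S R by (simp add: algebra_simps)
  qed
  then have "0 \<le> L" by (rule nonneg_if_nonneg_near_zero)
  then show ?thesis unfolding L_def g_def u_def h_def q_def .
qed

text \<open>Adding the optimality conditions of two successive proximal steps cancels the
  objective values.\<close>

lemma prox_argmin_successive:
  fixes f :: "real vec \<Rightarrow> real"
  assumes x1: "prox_argmin \<rho> f X A c1 P x0 x1" and x2: "prox_argmin \<rho> f X A c2 P x1 x2"
    and f: "convex_fun_vec n f" and X: "convex_set_vec n X"
    and A: "A \<in> carrier_mat l n" and c: "c1 \<in> carrier_vec l" "c2 \<in> carrier_vec l"
    and P: "P \<in> carrier_mat n n" "transpose_mat P = P" and x0: "x0 \<in> carrier_vec n"
  shows "(x1 - x2) \<bullet> (P *\<^sub>v ((x0 - x1) - (x1 - x2)))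
           + (A *\<^sub>v (x1 - x2)) \<bullet> (\<rho> \<cdot>\<^sub>v ((A *\<^sub>v x2 + c2) - (A *\<^sub>v x1 + c1))) \<ge> 0"
proof -
  have x12: "x1 \<in> X" "x2 \<in> X" using x1 x2 unfolding prox_argmin_def by blast+
  then have x1c: "x1 \<in> carrier_vec n" and x2c: "x2 \<in> carrier_vec n"
    using X unfolding convex_set_vec_def by auto
  note vi1 = prox_argmin_variational_ineq[OF x1 x12(2) f X A c(1) P x0]
  note vi2 = prox_argmin_variational_ineq[OF x2 x12(1) f X A c(2) P x1c]
  define h where "h = x1 - x2"
  define g where "g = A *\<^sub>v h"
  have hc: "h \<in> carrier_vec n" and gc: "g \<in> carrier_vec l" unfolding h_def g_def using x1c x2c A by auto
  have w: "A *\<^sub>v x1 + c1 \<in> carrier_vec l" "A *\<^sub>v x2 + c2 \<in> carrier_vec l" using A x1c x2c c by auto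
  have "x2 - x1 = - h" unfolding h_def using x1c x2c by (intro eq_vecI) auto
  then have neg: "A *\<^sub>v (x2 - x1) = - g" "(x2 - x1) \<bullet> (P *\<^sub>v (x1 - x0)) = - (h \<bullet> (P *\<^sub>v (x1 - x0)))"
    unfolding g_def using A P hc x0 x1c by (auto intro!: eq_vecI simp: scalar_prod_uminus_right)
  have "(- g) \<bullet> (A *\<^sub>v x1 + c1) = - (g \<bullet> (A *\<^sub>v x1 + c1))"
    using carrier_vecD[OF gc] carrier_vecD[OF w(1)] by simp
  then have vi1': "f x2 - f x1 - \<rho> * (g \<bullet> (A *\<^sub>v x1 + c1)) - h \<bullet> (P *\<^sub>v (x1 - x0)) \<ge> 0"
    using vi1 unfolding neg by simp
  have vi2': "f x1 - f x2 + \<rho> * (g \<bullet> (A *\<^sub>v x2 + c2)) + h \<bullet> (P *\<^sub>v (x2 - x1)) \<ge> 0"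
    using vi2 unfolding g_def h_def .
  have "h \<bullet> (P *\<^sub>v ((x0 - x1) - (x1 - x2))) = h \<bullet> (P *\<^sub>v (x2 - x1)) - h \<bullet> (P *\<^sub>v (x1 - x0))"
  proof -
    have "(x0 - x1) - (x1 - x2) = (x2 - x1) - (x1 - x0)" using x0 x1c x2c by (intro eq_vecI) auto
    then show ?thesis using P x0 x1c x2c hc
      by (simp add: mult_minus_distrib_mat_vec[OF P(1)] scalar_prod_minus_distrib[of _ n])
  qed
  moreover have "g \<bullet> (\<rho> \<cdot>\<^sub>v ((A *\<^sub>v x2 + c2) - (A *\<^sub>v x1 + c1)))
      = \<rho> * (g \<bullet> (A *\<^sub>v x2 + c2)) - \<rho> * (g \<bullet> (A *\<^sub>v x1 + c1))"
    using gc w by (simp add: scalar_prod_minus_distrib[of _ l] right_diff_distrib)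
  ultimately show ?thesis
    using vi1' vi2' unfolding h_def[symmetric] g_def[symmetric] by linarith
qed

section \<open>The L-GADMM iteration\<close>

locale lgadmm =
  fixes m l :: nat and n :: "nat \<Rightarrow> nat"
    and \<theta> :: "nat \<Rightarrow> real vec \<Rightarrow> real" and X :: "nat \<Rightarrow> real vec set"
    and A :: "nat \<Rightarrow> real mat" and b :: "real vec"
    and \<rho> \<gamma> :: real and P :: "nat \<Rightarrow> real mat"
    and x :: "nat \<Rightarrow> nat \<Rightarrow> real vec" and y :: "nat \<Rightarrow> real vec"
  assumes m_ge_2: "m \<ge> 2"
    and theta_convex: "\<forall>i\<in>{1..m}. convex_fun_vec (n i) (\<theta> i)"
    and X_convex: "\<forall>i\<in>{1..m}. convex_set_vec (n i) (X i)"
    and A_carrier: "\<forall>i\<in>{1..m}. A i \<in> carrier_mat l (n i)"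
    and b_carrier: "b \<in> carrier_vec l"
    and rho_pos: "\<rho> > 0" and gamma_pos: "\<gamma> > 0"
    and P_sym_pos: "\<forall>i\<in>{1..m}. sym_pos_def (n i) (P i)"
    and x_init: "\<forall>i\<in>{1..m}. x 0 i \<in> X i" and y_init: "y 0 \<in> carrier_vec l"
    and x_step: "\<forall>k. \<forall>j\<in>{1..m-1}. x (Suc k) j \<in> X j \<and>
        (\<forall>z\<in>X j.
           \<theta> j (x (Suc k) j)
             + \<rho> / 2 * sqnorm (A j *\<^sub>v x (Suc k) j + vsum l (\<lambda>i. A i *\<^sub>v x k i) ({1..m} - {j}) - b - (1 / \<rho>) \<cdot>\<^sub>v y k)
             + 1 / 2 * qnorm (P j) (x (Suc k) j - x k j)
           \<le> \<theta> j z
             + \<rho> / 2 * sqnorm (A j *\<^sub>v z + vsum l (\<lambda>i. A i *\<^sub>v x k i) ({1..m} - {j}) - b - (1 / \<rho>) \<cdot>\<^sub>v y k)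
             + 1 / 2 * qnorm (P j) (z - x k j))"
    and xm_step: "\<forall>k. x (Suc k) m \<in> X m \<and>
        (\<forall>z\<in>X m.
           \<theta> m (x (Suc k) m)
             + \<rho> / 2 * sqnorm (\<gamma> \<cdot>\<^sub>v vsum l (\<lambda>i. A i *\<^sub>v x (Suc k) i) {1..m-1} + (1 - \<gamma>) \<cdot>\<^sub>v (b - A m *\<^sub>v x k m)
                                + A m *\<^sub>v x (Suc k) m - b - (1 / \<rho>) \<cdot>\<^sub>v y k)
             + 1 / 2 * qnorm (P m) (x (Suc k) m - x k m)
           \<le> \<theta> m z
             + \<rho> / 2 * sqnorm (\<gamma> \<cdot>\<^sub>v vsum l (\<lambda>i. A i *\<^sub>v x (Suc k) i) {1..m-1} + (1 - \<gamma>) \<cdot>\<^sub>v (b - A m *\<^sub>v x k m)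
                                + A m *\<^sub>v z - b - (1 / \<rho>) \<cdot>\<^sub>v y k)
             + 1 / 2 * qnorm (P m) (z - x k m))"
    and y_step: "\<forall>k. y (Suc k) = y k - \<rho> \<cdot>\<^sub>v (\<gamma> \<cdot>\<^sub>v vsum l (\<lambda>i. A i *\<^sub>v x (Suc k) i) {1..m-1}
                      + (1 - \<gamma>) \<cdot>\<^sub>v (b - A m *\<^sub>v x k m) + A m *\<^sub>v x (Suc k) m - b)"
begin

lemma m_mem: "m \<in> {1..m}"
  using m_ge_2 by simp

lemma A_carrier_mat: "i \<in> {1..m} \<Longrightarrow> A i \<in> carrier_mat l (n i)"
  using A_carrier by blast

lemma P_carrier_mat: "i \<in> {1..m} \<Longrightarrow> P i \<in> carrier_mat (n i) (n i)"
  using P_sym_pos unfolding sym_pos_def_def by blast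

lemma P_symmetric: "i \<in> {1..m} \<Longrightarrow> transpose_mat (P i) = P i"
  using P_sym_pos unfolding sym_pos_def_def by blast

lemma x_in_X: "i \<in> {1..m} \<Longrightarrow> x t i \<in> X i"
  using x_init x_step xm_step by (cases t; cases "i = m") auto

lemma x_carrier: "i \<in> {1..m} \<Longrightarrow> x t i \<in> carrier_vec (n i)"
  using x_in_X X_convex unfolding convex_set_vec_def by blast

lemma A_mult_x_carrier: "i \<in> {1..m} \<Longrightarrow> A i *\<^sub>v x t i \<in> carrier_vec l"
  using mult_mat_vec_carrier[OF A_carrier_mat x_carrier] .

lemma dim_A_mult_x: "i \<in> {1..m} \<Longrightarrow> dim_vec (A i *\<^sub>v x t i) = l"
  by (rule carrier_vecD[OF A_mult_x_carrier])

lemma dim_b [simp]: "dim_vec b = l"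
  by (rule carrier_vecD[OF b_carrier])

definition AxR :: "nat \<Rightarrow> real vec" where
  "AxR t = vsum l (\<lambda>i. A i *\<^sub>v x t i) {1..m-1}"

definition ybar :: "nat \<Rightarrow> real vec" where
  "ybar t = y t - \<rho> \<cdot>\<^sub>v (vsum l (\<lambda>i. A i *\<^sub>v x (Suc t) i) {1..m-1} + A m *\<^sub>v x t m - b)"

lemma y_Suc:
  "y (Suc t) = y t - \<rho> \<cdot>\<^sub>v (\<gamma> \<cdot>\<^sub>v AxR (Suc t) + (1 - \<gamma>) \<cdot>\<^sub>v (b - A m *\<^sub>v x t m) + A m *\<^sub>v x (Suc t) m - b)"
  using y_step unfolding AxR_def by blast

lemma y_carrier: "y t \<in> carrier_vec l"
  by (induction t) (use y_init b_carrier A_mult_x_carrier[OF m_mem] in \<open>auto simp: y_Suc AxR_def\<close>)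

lemma dim_y [simp]: "dim_vec (y t) = l"
  by (rule carrier_vecD[OF y_carrier])

lemma ybar_carrier: "ybar t \<in> carrier_vec l"
  using y_carrier b_carrier A_mult_x_carrier[OF m_mem] by (simp add: ybar_def)

lemma dim_ybar [simp]: "dim_vec (ybar t) = l"
  by (rule carrier_vecD[OF ybar_carrier])

lemma index_AxR: "r < l \<Longrightarrow> AxR t $ r = (\<Sum>i\<in>{1..m-1}. (A i *\<^sub>v x t i) $ r)"
  by (simp add: AxR_def index_vsum)

lemma index_y_Suc:
  "r < l \<Longrightarrow> y (Suc t) $ r = y t $ r - \<rho> * (\<gamma> * AxR (Suc t) $ r
     + (1 - \<gamma>) * (b $ r - (A m *\<^sub>v x t m) $ r) + (A m *\<^sub>v x (Suc t) m) $ r - b $ r)"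
  using dim_A_mult_x[OF m_mem] by (simp add: y_Suc AxR_def del: index_mult_mat_vec)

lemma index_ybar:
  "r < l \<Longrightarrow> ybar t $ r = y t $ r - \<rho> * (AxR (Suc t) $ r + (A m *\<^sub>v x t m) $ r - b $ r)"
  using dim_A_mult_x[OF m_mem] by (simp add: ybar_def AxR_def del: index_mult_mat_vec)

text \<open>dx t, dy t are the blocks of w^t - wbar^t (the x-part of wbar^t is x^(t+1)); ddx t, ddy t
  are the blocks of (w^t - wbar^t) - (w^(t+1) - wbar^(t+1)), and dybar t = ybar^t - ybar^(t+1).\<close>

definition dx :: "nat \<Rightarrow> nat \<Rightarrow> real vec" where
  "dx t i = x t i - x (Suc t) i"

definition ddx :: "nat \<Rightarrow> nat \<Rightarrow> real vec" where
  "ddx t i = dx t i - dx (Suc t) i"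

definition dy :: "nat \<Rightarrow> real vec" where
  "dy t = y t - ybar t"

definition ddy :: "nat \<Rightarrow> real vec" where
  "ddy t = dy t - dy (Suc t)"

definition dybar :: "nat \<Rightarrow> real vec" where
  "dybar t = ybar t - ybar (Suc t)"

lemma dx_carrier: "i \<in> {1..m} \<Longrightarrow> dx t i \<in> carrier_vec (n i)"
  using x_carrier by (simp add: dx_def)

lemma ddx_carrier: "i \<in> {1..m} \<Longrightarrow> ddx t i \<in> carrier_vec (n i)"
  using dx_carrier by (simp add: ddx_def)

lemma dy_carrier: "dy t \<in> carrier_vec l"
  using y_carrier ybar_carrier by (simp add: dy_def)

lemma ddy_carrier: "ddy t \<in> carrier_vec l"
  using dy_carrier by (simp add: ddy_def)

lemma dybar_carrier: "dybar t \<in> carrier_vec l"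
  using ybar_carrier by (simp add: dybar_def)

lemma index_A_dx:
  assumes "i \<in> {1..m}" "r < l"
  shows "(A i *\<^sub>v dx t i) $ r = (A i *\<^sub>v x t i) $ r - (A i *\<^sub>v x (Suc t) i) $ r"
  using assms dim_A_mult_x[OF assms(1)]
  by (simp add: dx_def mult_minus_distrib_mat_vec[OF A_carrier_mat x_carrier x_carrier] del: index_mult_mat_vec)

lemma index_A_ddx:
  assumes "i \<in> {1..m}" "r < l"
  shows "(A i *\<^sub>v ddx t i) $ r
    = (A i *\<^sub>v x t i) $ r - 2 * (A i *\<^sub>v x (Suc t) i) $ r + (A i *\<^sub>v x (Suc (Suc t)) i) $ r"
  using assms carrier_vecD[OF mult_mat_vec_carrier[OF A_carrier_mat dx_carrier]]
  by (simp add: ddx_def mult_minus_distrib_mat_vec[OF A_carrier_mat dx_carrier dx_carrier]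
      index_A_dx del: index_mult_mat_vec)

lemma index_dy: "r < l \<Longrightarrow> dy t $ r = \<rho> * (AxR (Suc t) $ r + (A m *\<^sub>v x t m) $ r - b $ r)"
  by (simp add: dy_def index_ybar del: index_mult_mat_vec)

definition cx :: "nat \<Rightarrow> nat \<Rightarrow> real vec" where
  "cx t j = vsum l (\<lambda>i. A i *\<^sub>v x t i) ({1..m} - {j}) - b - (1 / \<rho>) \<cdot>\<^sub>v y t"

definition cxm :: "nat \<Rightarrow> real vec" where
  "cxm t = \<gamma> \<cdot>\<^sub>v AxR (Suc t) + (1 - \<gamma>) \<cdot>\<^sub>v (b - A m *\<^sub>v x t m) - b - (1 / \<rho>) \<cdot>\<^sub>v y t"

lemma cx_carrier: "cx t j \<in> carrier_vec l"
  using b_carrier y_carrier by (simp add: cx_def)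

lemma cxm_carrier: "cxm t \<in> carrier_vec l"
  using b_carrier y_carrier A_mult_x_carrier[OF m_mem] by (simp add: cxm_def AxR_def)

lemma x_prox_argmin:
  assumes j: "j \<in> {1..m-1}"
  shows "prox_argmin \<rho> (\<theta> j) (X j) (A j) (cx t j) (P j) (x t j) (x (Suc t) j)"
proof -
  have jI: "j \<in> {1..m}" using j by auto
  have eq: "A j *\<^sub>v z + vsum l (\<lambda>i. A i *\<^sub>v x t i) ({1..m} - {j}) - b - (1 / \<rho>) \<cdot>\<^sub>v y t
      = A j *\<^sub>v z + cx t j" if "z \<in> X j" for z
  proof -
    have "dim_vec (A j *\<^sub>v z) = l" using A_carrier_mat[OF jI] by simp
    then show ?thesis by (intro eq_vecI) (auto simp: cx_def)
  qed
  show ?thesis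
    using bspec[OF spec[OF x_step, of t] j] unfolding prox_argmin_def
    by (simp only: eq[OF x_in_X[OF jI]] eq cong: ball_cong) simp
qed

lemma xm_prox_argmin: "prox_argmin \<rho> (\<theta> m) (X m) (A m) (cxm t) (P m) (x t m) (x (Suc t) m)"
proof -
  have eq: "\<gamma> \<cdot>\<^sub>v vsum l (\<lambda>i. A i *\<^sub>v x (Suc t) i) {1..m-1} + (1 - \<gamma>) \<cdot>\<^sub>v (b - A m *\<^sub>v x t m)
      + A m *\<^sub>v z - b - (1 / \<rho>) \<cdot>\<^sub>v y t = A m *\<^sub>v z + cxm t" if "z \<in> X m" for z
  proof -
    have "dim_vec (A m *\<^sub>v z) = l" using A_carrier_mat[OF m_mem] by simp
    then show ?thesis
      using dim_A_mult_x[OF m_mem] by (intro eq_vecI) (auto simp: cxm_def AxR_def)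
  qed
  show ?thesis
    using spec[OF xm_step, of t] unfolding prox_argmin_def
    by (simp only: eq[OF x_in_X[OF m_mem]] eq cong: ball_cong) simp
qed

definition VR :: "nat \<Rightarrow> nat \<Rightarrow> real vec" where
  "VR k j = vsum l (\<lambda>i. A i *\<^sub>v ddx k i) ({1..m-1} - {j})"

lemma VR_carrier: "VR k j \<in> carrier_vec l"
  by (simp add: VR_def)

lemma cx_increment:
  assumes j: "j \<in> {1..m-1}"
  shows "\<rho> \<cdot>\<^sub>v ((A j *\<^sub>v x (Suc (Suc k)) j + cx (Suc k) j) - (A j *\<^sub>v x (Suc k) j + cx k j))
    = dybar k - \<rho> \<cdot>\<^sub>v VR k j"
proof (rule eq_vecI)
  fix r assume "r < dim_vec (dybar k - \<rho> \<cdot>\<^sub>v VR k j)"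
  then have r: "r < l" by (simp add: VR_def)
  define J where "J = {1..m-1} - {j}"
  let ?a = "\<lambda>t i. (A i *\<^sub>v x t i) $ r"
  have jI: "j \<in> {1..m}" and JI: "\<And>i. i \<in> J \<Longrightarrow> i \<in> {1..m}" using j unfolding J_def by auto
  have insert_J: "{1..m} - {j} = insert m J" "m \<notin> J" "finite J"
    using j m_ge_2 unfolding J_def by auto
  have sum_R: "(\<Sum>i\<in>{1..m-1}. f i) = f j + (\<Sum>i\<in>J. f i)" for f :: "nat \<Rightarrow> real"
    unfolding J_def by (rule sum.remove) (use j in auto)
  have cx_r: "cx t j $ r = ?a t m + (\<Sum>i\<in>J. ?a t i) - b $ r - y t $ r / \<rho>" for t
  proof -
    have "cx t j $ r = (\<Sum>i\<in>insert m J. ?a t i) - b $ r - y t $ r / \<rho>"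
      unfolding insert_J(1)[symmetric] using r by (simp add: cx_def index_vsum del: index_mult_mat_vec)
    then show ?thesis using insert_J by simp
  qed
  have AxR_r: "AxR t $ r = ?a t j + (\<Sum>i\<in>J. ?a t i)" for t
    unfolding index_AxR[OF r] by (rule sum_R)
  have "VR k j $ r = (\<Sum>i\<in>J. ?a k i - 2 * ?a (Suc k) i + ?a (Suc (Suc k)) i)"
    unfolding VR_def J_def[symmetric] index_vsum[OF r]
    by (rule sum.cong) (simp_all add: index_A_ddx[OF JI r] del: index_mult_mat_vec)
  then have VR_r: "VR k j $ r
      = (\<Sum>i\<in>J. ?a k i) - 2 * (\<Sum>i\<in>J. ?a (Suc k) i) + (\<Sum>i\<in>J. ?a (Suc (Suc k)) i)"
    by (simp add: sum.distrib sum_subtractf sum_distrib_left)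
  show "(\<rho> \<cdot>\<^sub>v ((A j *\<^sub>v x (Suc (Suc k)) j + cx (Suc k) j) - (A j *\<^sub>v x (Suc k) j + cx k j))) $ r
      = (dybar k - \<rho> \<cdot>\<^sub>v VR k j) $ r"
    using r rho_pos dim_A_mult_x[OF jI] carrier_vecD[OF cx_carrier] carrier_vecD[OF VR_carrier]
    by (simp add: dybar_def index_ybar index_y_Suc cx_r AxR_r VR_r field_simps
        del: index_mult_mat_vec)
qed (simp add: dybar_def VR_def carrier_vecD[OF cx_carrier])

lemma cxm_increment:
  "\<rho> \<cdot>\<^sub>v ((A m *\<^sub>v x (Suc (Suc k)) m + cxm (Suc k)) - (A m *\<^sub>v x (Suc k) m + cxm k))
    = \<rho> \<cdot>\<^sub>v (A m *\<^sub>v ddx k m) + (1 - \<gamma>) \<cdot>\<^sub>v ddy k + dybar k"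
proof (rule eq_vecI)
  fix r assume "r < dim_vec (\<rho> \<cdot>\<^sub>v (A m *\<^sub>v ddx k m) + (1 - \<gamma>) \<cdot>\<^sub>v ddy k + dybar k)"
  then have r: "r < l" by (simp add: dybar_def)
  have cxm_r: "cxm t $ r = \<gamma> * AxR (Suc t) $ r + (1 - \<gamma>) * (b $ r - (A m *\<^sub>v x t m) $ r)
      - b $ r - y t $ r / \<rho>" for t
    using r dim_A_mult_x[OF m_mem] by (simp add: cxm_def AxR_def del: index_mult_mat_vec)
  show "(\<rho> \<cdot>\<^sub>v ((A m *\<^sub>v x (Suc (Suc k)) m + cxm (Suc k)) - (A m *\<^sub>v x (Suc k) m + cxm k))) $ r
      = (\<rho> \<cdot>\<^sub>v (A m *\<^sub>v ddx k m) + (1 - \<gamma>) \<cdot>\<^sub>v ddy k + dybar k) $ r"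
    using r rho_pos dim_A_mult_x[OF m_mem] carrier_vecD[OF cxm_carrier]
      carrier_vecD[OF mult_mat_vec_carrier[OF A_carrier_mat[OF m_mem] ddx_carrier[OF m_mem]]]
    by (simp add: dybar_def ddy_def dy_def index_ybar index_y_Suc cxm_r index_A_ddx[OF m_mem r]
        field_simps del: index_mult_mat_vec)
qed (simp add: dybar_def carrier_vecD[OF cxm_carrier])

lemma x_block_ineq:
  assumes j: "j \<in> {1..m-1}"
  shows "dx (Suc k) j \<bullet> (P j *\<^sub>v ddx k j - \<rho> \<cdot>\<^sub>v (transpose_mat (A j) *\<^sub>v VR k j))
           + (A j *\<^sub>v dx (Suc k) j) \<bullet> dybar k \<ge> 0"
proof -
  have jI: "j \<in> {1..m}" using j by auto
  note Aj = A_carrier_mat[OF jI] and h = dx_carrier[OF jI, of "Suc k"]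
  have "0 \<le> dx (Suc k) j \<bullet> (P j *\<^sub>v ddx k j) + (A j *\<^sub>v dx (Suc k) j) \<bullet> (dybar k - \<rho> \<cdot>\<^sub>v VR k j)"
    using prox_argmin_successive[OF x_prox_argmin[OF j] x_prox_argmin[OF j]
        bspec[OF theta_convex jI] bspec[OF X_convex jI] Aj cx_carrier cx_carrier
        P_carrier_mat[OF jI] P_symmetric[OF jI] x_carrier[OF jI]]
    unfolding cx_increment[OF j] by (simp only: dx_def ddx_def)
  moreover have "dx (Suc k) j \<bullet> (P j *\<^sub>v ddx k j - \<rho> \<cdot>\<^sub>v (transpose_mat (A j) *\<^sub>v VR k j))
      = dx (Suc k) j \<bullet> (P j *\<^sub>v ddx k j) - \<rho> * ((A j *\<^sub>v dx (Suc k) j) \<bullet> VR k j)"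
    using h Aj P_carrier_mat[OF jI] ddx_carrier[OF jI] VR_carrier
      scalar_prod_transpose_mult_vec[OF Aj h VR_carrier]
    by (simp add: scalar_prod_minus_distrib[of _ "n j"])
  moreover have "(A j *\<^sub>v dx (Suc k) j) \<bullet> (dybar k - \<rho> \<cdot>\<^sub>v VR k j)
      = (A j *\<^sub>v dx (Suc k) j) \<bullet> dybar k - \<rho> * ((A j *\<^sub>v dx (Suc k) j) \<bullet> VR k j)"
    using mult_mat_vec_carrier[OF Aj h] dybar_carrier[of k] VR_carrier[of k j]
    by (simp add: scalar_prod_minus_distrib[of _ l])
  ultimately show ?thesis by linarith
qed

definition QDelta_xm :: "nat \<Rightarrow> real vec" where
  "QDelta_xm k = \<rho> \<cdot>\<^sub>v (transpose_mat (A m) *\<^sub>v (A m *\<^sub>v ddx k m)) + P m *\<^sub>v ddx k m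
          + (1 - \<gamma>) \<cdot>\<^sub>v (transpose_mat (A m) *\<^sub>v ddy k)"

lemma xm_block_ineq: "dx (Suc k) m \<bullet> QDelta_xm k + (A m *\<^sub>v dx (Suc k) m) \<bullet> dybar k \<ge> 0"
proof -
  note Am = A_carrier_mat[OF m_mem] and h = dx_carrier[OF m_mem, of "Suc k"]
    and e = ddx_carrier[OF m_mem, of k]
  have Ae: "A m *\<^sub>v ddx k m \<in> carrier_vec l" using Am e by simp
  have Ah: "A m *\<^sub>v dx (Suc k) m \<in> carrier_vec l" using Am h by simp
  have "0 \<le> dx (Suc k) m \<bullet> (P m *\<^sub>v ddx k m)
      + (A m *\<^sub>v dx (Suc k) m) \<bullet> (\<rho> \<cdot>\<^sub>v (A m *\<^sub>v ddx k m) + (1 - \<gamma>) \<cdot>\<^sub>v ddy k + dybar k)"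
    using prox_argmin_successive[OF xm_prox_argmin xm_prox_argmin
        bspec[OF theta_convex m_mem] bspec[OF X_convex m_mem] Am cxm_carrier cxm_carrier
        P_carrier_mat[OF m_mem] P_symmetric[OF m_mem] x_carrier[OF m_mem]]
    unfolding cxm_increment by (simp only: dx_def ddx_def)
  moreover have "dx (Suc k) m \<bullet> QDelta_xm k = \<rho> * ((A m *\<^sub>v dx (Suc k) m) \<bullet> (A m *\<^sub>v ddx k m))
      + dx (Suc k) m \<bullet> (P m *\<^sub>v ddx k m) + (1 - \<gamma>) * ((A m *\<^sub>v dx (Suc k) m) \<bullet> ddy k)"
    unfolding QDelta_xm_def
    using h Am P_carrier_mat[OF m_mem] e Ae ddy_carrier
      scalar_prod_transpose_mult_vec[OF Am h Ae] scalar_prod_transpose_mult_vec[OF Am h ddy_carrier]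
    by (simp add: scalar_prod_add_distrib[of _ "n m"])
  moreover have "(A m *\<^sub>v dx (Suc k) m) \<bullet> (\<rho> \<cdot>\<^sub>v (A m *\<^sub>v ddx k m) + (1 - \<gamma>) \<cdot>\<^sub>v ddy k + dybar k)
      = \<rho> * ((A m *\<^sub>v dx (Suc k) m) \<bullet> (A m *\<^sub>v ddx k m))
        + (1 - \<gamma>) * ((A m *\<^sub>v dx (Suc k) m) \<bullet> ddy k) + (A m *\<^sub>v dx (Suc k) m) \<bullet> dybar k"
    using Ah Ae ddy_carrier dybar_carrier by (simp add: scalar_prod_add_distrib[of _ l])
  ultimately show ?thesis by linarith
qed

text \<open>Block sizes of R = (x_1, ..., x_(m-1)), indexed from 0.\<close>

abbreviation dR :: "nat \<Rightarrow> nat" where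
  "dR \<equiv> \<lambda>i. n (Suc i)"

definition nR :: nat where
  "nR = offs dR (m - 1)"

definition G1 :: "real mat" where
  "G1 = block_mat dR (m - 1)
     (\<lambda>i j. if i = j then P (Suc i) else (- \<rho>) \<cdot>\<^sub>m (transpose_mat (A (Suc i)) * A (Suc j)))"

definition d3 :: "nat \<Rightarrow> nat" where
  "d3 = (\<lambda>i. if i = 0 then nR else if i = 1 then n m else l)"

definition Qblk :: "nat \<Rightarrow> nat \<Rightarrow> real mat" where
  "Qblk i j =
     (if i = 0 \<and> j = 0 then G1
     else if i = 1 \<and> j = 1 then \<rho> \<cdot>\<^sub>m (transpose_mat (A m) * A m) + P m
     else if i = 1 \<and> j = 2 then (1 - \<gamma>) \<cdot>\<^sub>m transpose_mat (A m)
     else if i = 2 \<and> j = 1 then - A m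
     else if i = 2 \<and> j = 2 then (1 / \<rho>) \<cdot>\<^sub>m 1\<^sub>m l
     else 0\<^sub>m (d3 i) (d3 j))"

definition Mblk :: "nat \<Rightarrow> nat \<Rightarrow> real mat" where
  "Mblk i j =
     (if i = 0 \<and> j = 0 then 1\<^sub>m nR
     else if i = 1 \<and> j = 1 then 1\<^sub>m (n m)
     else if i = 2 \<and> j = 1 then (- \<rho>) \<cdot>\<^sub>m A m
     else if i = 2 \<and> j = 2 then \<gamma> \<cdot>\<^sub>m 1\<^sub>m l
     else 0\<^sub>m (d3 i) (d3 j))"

definition Hblk :: "nat \<Rightarrow> nat \<Rightarrow> real mat" where
  "Hblk i j =
     (if i = 0 \<and> j = 0 then G1
     else if i = 1 \<and> j = 1 then P m + (\<rho> / \<gamma>) \<cdot>\<^sub>m (transpose_mat (A m) * A m)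
     else if i = 1 \<and> j = 2 then ((1 - \<gamma>) / \<gamma>) \<cdot>\<^sub>m transpose_mat (A m)
     else if i = 2 \<and> j = 1 then ((1 - \<gamma>) / \<gamma>) \<cdot>\<^sub>m A m
     else if i = 2 \<and> j = 2 then (1 / (\<gamma> * \<rho>)) \<cdot>\<^sub>m 1\<^sub>m l
     else 0\<^sub>m (d3 i) (d3 j))"

definition Q :: "real mat" where "Q = block_mat d3 3 Qblk"
definition M :: "real mat" where "M = block_mat d3 3 Mblk"
definition H :: "real mat" where "H = block_mat d3 3 Hblk"

lemma d3_simps [simp]: "d3 0 = nR" "d3 1 = n m" "d3 (Suc 0) = n m" "d3 2 = l"
  by (simp_all add: d3_def)

lemma G1_carrier: "G1 \<in> carrier_mat nR nR"
  by (simp add: G1_def nR_def)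

lemma stack_R_carrier: "stack_vec dR (m - 1) v \<in> carrier_vec nR"
  by (simp add: nR_def)

lemma Qblk_carrier: "i < 3 \<Longrightarrow> j < 3 \<Longrightarrow> Qblk i j \<in> carrier_mat (d3 i) (d3 j)"
  using G1_carrier A_carrier_mat[OF m_mem] P_carrier_mat[OF m_mem]
  by (auto dest!: less_3_cases simp: Qblk_def)

lemma Mblk_carrier: "i < 3 \<Longrightarrow> j < 3 \<Longrightarrow> Mblk i j \<in> carrier_mat (d3 i) (d3 j)"
  using A_carrier_mat[OF m_mem] by (auto dest!: less_3_cases simp: Mblk_def)

lemma Hblk_carrier: "i < 3 \<Longrightarrow> j < 3 \<Longrightarrow> Hblk i j \<in> carrier_mat (d3 i) (d3 j)"
  using G1_carrier A_carrier_mat[OF m_mem] P_carrier_mat[OF m_mem]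
  by (auto dest!: less_3_cases simp: Hblk_def)

lemma Q_mult_stack3:
  assumes a: "a \<in> carrier_vec nR" and u: "u \<in> carrier_vec (n m)" and v: "v \<in> carrier_vec l"
  shows "Q *\<^sub>v stack3 d3 a u v = stack3 d3 (G1 *\<^sub>v a)
     (\<rho> \<cdot>\<^sub>v (transpose_mat (A m) *\<^sub>v (A m *\<^sub>v u)) + P m *\<^sub>v u + (1 - \<gamma>) \<cdot>\<^sub>v (transpose_mat (A m) *\<^sub>v v))
     (- (A m *\<^sub>v u) + (1 / \<rho>) \<cdot>\<^sub>v v)"
proof -
  note Am = A_carrier_mat[OF m_mem] and Pm = P_carrier_mat[OF m_mem]
  have At: "transpose_mat (A m) \<in> carrier_mat (n m) l" using Am by simp
  have AtA: "transpose_mat (A m) * A m \<in> carrier_mat (n m) (n m)" using Am by simp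
  have "Qblk 0 0 *\<^sub>v a + Qblk 0 1 *\<^sub>v u + Qblk 0 2 *\<^sub>v v = G1 *\<^sub>v a"
    using a u v G1_carrier by (simp add: Qblk_def zero_mat_mult_vec)
  moreover have "Qblk 1 0 *\<^sub>v a + Qblk 1 1 *\<^sub>v u + Qblk 1 2 *\<^sub>v v
      = \<rho> \<cdot>\<^sub>v (transpose_mat (A m) *\<^sub>v (A m *\<^sub>v u)) + P m *\<^sub>v u + (1 - \<gamma>) \<cdot>\<^sub>v (transpose_mat (A m) *\<^sub>v v)"
    using a u v At Am Pm
    by (simp add: Qblk_def zero_mat_mult_vec smult_mat_mult_vec[OF AtA u] smult_mat_mult_vec[OF At v]
        add_mult_distrib_mat_vec[OF smult_carrier_mat[OF AtA] Pm u] assoc_mult_mat_vec[OF At Am u])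
  moreover have "Qblk 2 0 *\<^sub>v a + Qblk 2 1 *\<^sub>v u + Qblk 2 2 *\<^sub>v v = - (A m *\<^sub>v u) + (1 / \<rho>) \<cdot>\<^sub>v v"
    using a u v Am by (simp add: Qblk_def zero_mat_mult_vec smult_mat_mult_vec[OF one_carrier_mat v])
  ultimately show ?thesis
    unfolding Q_def using block_mat3_mult_stack3[OF Qblk_carrier, where a = a and b = u and c = v] a u v by simp
qed

lemma M_mult_stack3:
  assumes a: "a \<in> carrier_vec nR" and u: "u \<in> carrier_vec (n m)" and v: "v \<in> carrier_vec l"
  shows "M *\<^sub>v stack3 d3 a u v = stack3 d3 a u ((- \<rho>) \<cdot>\<^sub>v (A m *\<^sub>v u) + \<gamma> \<cdot>\<^sub>v v)"
proof -
  note Am = A_carrier_mat[OF m_mem]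
  have "Mblk 0 0 *\<^sub>v a + Mblk 0 1 *\<^sub>v u + Mblk 0 2 *\<^sub>v v = a"
    using a u v by (simp add: Mblk_def zero_mat_mult_vec)
  moreover have "Mblk 1 0 *\<^sub>v a + Mblk 1 1 *\<^sub>v u + Mblk 1 2 *\<^sub>v v = u"
    using a u v by (simp add: Mblk_def zero_mat_mult_vec)
  moreover have "Mblk 2 0 *\<^sub>v a + Mblk 2 1 *\<^sub>v u + Mblk 2 2 *\<^sub>v v = (- \<rho>) \<cdot>\<^sub>v (A m *\<^sub>v u) + \<gamma> \<cdot>\<^sub>v v"
    using a u v Am
    by (simp add: Mblk_def zero_mat_mult_vec smult_mat_mult_vec[OF Am u] smult_mat_mult_vec[OF one_carrier_mat v])
  ultimately show ?thesis
    unfolding M_def using block_mat3_mult_stack3[OF Mblk_carrier, where a = a and b = u and c = v] a u v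
    by simp
qed

lemma H_mult_stack3:
  assumes a: "a \<in> carrier_vec nR" and u: "u \<in> carrier_vec (n m)" and v: "v \<in> carrier_vec l"
  shows "H *\<^sub>v stack3 d3 a u v = stack3 d3 (G1 *\<^sub>v a)
     (P m *\<^sub>v u + (\<rho> / \<gamma>) \<cdot>\<^sub>v (transpose_mat (A m) *\<^sub>v (A m *\<^sub>v u)) + ((1 - \<gamma>) / \<gamma>) \<cdot>\<^sub>v (transpose_mat (A m) *\<^sub>v v))
     (((1 - \<gamma>) / \<gamma>) \<cdot>\<^sub>v (A m *\<^sub>v u) + (1 / (\<gamma> * \<rho>)) \<cdot>\<^sub>v v)"
proof -
  note Am = A_carrier_mat[OF m_mem] and Pm = P_carrier_mat[OF m_mem]
  have At: "transpose_mat (A m) \<in> carrier_mat (n m) l" using Am by simp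
  have AtA: "transpose_mat (A m) * A m \<in> carrier_mat (n m) (n m)" using Am by simp
  have "Hblk 0 0 *\<^sub>v a + Hblk 0 1 *\<^sub>v u + Hblk 0 2 *\<^sub>v v = G1 *\<^sub>v a"
    using a u v G1_carrier by (simp add: Hblk_def zero_mat_mult_vec)
  moreover have "Hblk 1 0 *\<^sub>v a + Hblk 1 1 *\<^sub>v u + Hblk 1 2 *\<^sub>v v
      = P m *\<^sub>v u + (\<rho> / \<gamma>) \<cdot>\<^sub>v (transpose_mat (A m) *\<^sub>v (A m *\<^sub>v u)) + ((1 - \<gamma>) / \<gamma>) \<cdot>\<^sub>v (transpose_mat (A m) *\<^sub>v v)"
    using a u v At Am Pm
    by (simp add: Hblk_def zero_mat_mult_vec smult_mat_mult_vec[OF AtA u] smult_mat_mult_vec[OF At v]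
        add_mult_distrib_mat_vec[OF Pm smult_carrier_mat[OF AtA] u] assoc_mult_mat_vec[OF At Am u])
  moreover have "Hblk 2 0 *\<^sub>v a + Hblk 2 1 *\<^sub>v u + Hblk 2 2 *\<^sub>v v
      = ((1 - \<gamma>) / \<gamma>) \<cdot>\<^sub>v (A m *\<^sub>v u) + (1 / (\<gamma> * \<rho>)) \<cdot>\<^sub>v v"
    using a u v Am
    by (simp add: Hblk_def zero_mat_mult_vec smult_mat_mult_vec[OF Am u] smult_mat_mult_vec[OF one_carrier_mat v])
  ultimately show ?thesis
    unfolding H_def using block_mat3_mult_stack3[OF Hblk_carrier, where a = a and b = u and c = v] a u v
    by simp
qed

lemma H_M_mult_stack3:
  assumes a: "a \<in> carrier_vec nR" and u: "u \<in> carrier_vec (n m)" and v: "v \<in> carrier_vec l"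
  shows "H *\<^sub>v (M *\<^sub>v stack3 d3 a u v) = Q *\<^sub>v stack3 d3 a u v"
proof -
  note Am = A_carrier_mat[OF m_mem] and Pm = P_carrier_mat[OF m_mem]
  have At: "transpose_mat (A m) \<in> carrier_mat (n m) l" using Am by simp
  have Au: "A m *\<^sub>v u \<in> carrier_vec l" using Am u by simp
  have "transpose_mat (A m) *\<^sub>v ((- \<rho>) \<cdot>\<^sub>v (A m *\<^sub>v u) + \<gamma> \<cdot>\<^sub>v v)
      = (- \<rho>) \<cdot>\<^sub>v (transpose_mat (A m) *\<^sub>v (A m *\<^sub>v u)) + \<gamma> \<cdot>\<^sub>v (transpose_mat (A m) *\<^sub>v v)"
    using Au v by (simp add: mult_add_distrib_mat_vec[OF At] mult_mat_vec[OF At])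
  then have "P m *\<^sub>v u + (\<rho> / \<gamma>) \<cdot>\<^sub>v (transpose_mat (A m) *\<^sub>v (A m *\<^sub>v u))
        + ((1 - \<gamma>) / \<gamma>) \<cdot>\<^sub>v (transpose_mat (A m) *\<^sub>v ((- \<rho>) \<cdot>\<^sub>v (A m *\<^sub>v u) + \<gamma> \<cdot>\<^sub>v v))
      = \<rho> \<cdot>\<^sub>v (transpose_mat (A m) *\<^sub>v (A m *\<^sub>v u)) + P m *\<^sub>v u + (1 - \<gamma>) \<cdot>\<^sub>v (transpose_mat (A m) *\<^sub>v v)"
    using Am Pm u v gamma_pos by (intro eq_vecI) (auto simp: field_simps)
  moreover have "((1 - \<gamma>) / \<gamma>) \<cdot>\<^sub>v (A m *\<^sub>v u) + (1 / (\<gamma> * \<rho>)) \<cdot>\<^sub>v ((- \<rho>) \<cdot>\<^sub>v (A m *\<^sub>v u) + \<gamma> \<cdot>\<^sub>v v)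
      = - (A m *\<^sub>v u) + (1 / \<rho>) \<cdot>\<^sub>v v"
    using Am u v gamma_pos rho_pos by (intro eq_vecI) (auto simp: field_simps)
  moreover have "(- \<rho>) \<cdot>\<^sub>v (A m *\<^sub>v u) + \<gamma> \<cdot>\<^sub>v v \<in> carrier_vec l" using Au v by simp
  ultimately show ?thesis
    using a u v by (simp add: M_mult_stack3 H_mult_stack3 Q_mult_stack3)
qed

lemma G1_mult_ddx:
  "G1 *\<^sub>v stack_vec dR (m - 1) (\<lambda>i. ddx k (Suc i))
     = stack_vec dR (m - 1) (\<lambda>i. P (Suc i) *\<^sub>v ddx k (Suc i) - \<rho> \<cdot>\<^sub>v (transpose_mat (A (Suc i)) *\<^sub>v VR k (Suc i)))"
proof -
  have Suc_mem: "i < m - 1 \<Longrightarrow> Suc i \<in> {1..m}" for i by auto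
  have "G1 *\<^sub>v stack_vec dR (m - 1) (\<lambda>i. ddx k (Suc i))
     = stack_vec dR (m - 1) (\<lambda>i. P (Suc i) *\<^sub>v ddx k (Suc i) + (- \<rho>) \<cdot>\<^sub>v (transpose_mat (A (Suc i))
         *\<^sub>v vsum l (\<lambda>j. A (Suc j) *\<^sub>v ddx k (Suc j)) ({..<m - 1} - {i})))"
    unfolding G1_def
    by (rule block_mat_gram_mult_stack_vec) (simp_all add: P_carrier_mat A_carrier_mat ddx_carrier Suc_mem)
  also have "\<dots> = stack_vec dR (m - 1)
      (\<lambda>i. P (Suc i) *\<^sub>v ddx k (Suc i) - \<rho> \<cdot>\<^sub>v (transpose_mat (A (Suc i)) *\<^sub>v VR k (Suc i)))"
  proof (rule stack_vec_cong)
    fix i assume i: "i < m - 1"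
    have "{1..m-1} - {Suc i} = Suc ` ({..<m - 1} - {i})"
    proof
      show "{1..m-1} - {Suc i} \<subseteq> Suc ` ({..<m - 1} - {i})"
      proof
        fix z assume "z \<in> {1..m-1} - {Suc i}"
        then have "z = Suc (z - 1)" "z - 1 \<in> {..<m - 1} - {i}" by auto
        then show "z \<in> Suc ` ({..<m - 1} - {i})" by (metis imageI)
      qed
    qed auto
    then have "VR k (Suc i) = vsum l (\<lambda>j. A (Suc j) *\<^sub>v ddx k (Suc j)) ({..<m - 1} - {i})"
      unfolding VR_def by (simp add: vsum_reindex)
    then show "P (Suc i) *\<^sub>v ddx k (Suc i) + (- \<rho>) \<cdot>\<^sub>v (transpose_mat (A (Suc i))
         *\<^sub>v vsum l (\<lambda>j. A (Suc j) *\<^sub>v ddx k (Suc j)) ({..<m - 1} - {i}))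
      = P (Suc i) *\<^sub>v ddx k (Suc i) - \<rho> \<cdot>\<^sub>v (transpose_mat (A (Suc i)) *\<^sub>v VR k (Suc i))"
      using P_carrier_mat[OF Suc_mem[OF i]] A_carrier_mat[OF Suc_mem[OF i]] ddx_carrier[OF Suc_mem[OF i]]
        VR_carrier[of k "Suc i"]
      by (intro eq_vecI) auto
  qed
  finally show ?thesis .
qed

definition w :: "nat \<Rightarrow> real vec" where
  "w t = stack3 d3 (stack_vec dR (m - 1) (\<lambda>i. x t (Suc i))) (x t m) (y t)"

definition wbar :: "nat \<Rightarrow> real vec" where
  "wbar t = stack3 d3 (stack_vec dR (m - 1) (\<lambda>i. x (Suc t) (Suc i))) (x (Suc t) m) (ybar t)"

definition dlt :: "nat \<Rightarrow> real vec" where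
  "dlt t = w t - wbar t"

lemma stack3_d3_minus:
  assumes "\<And>i. i \<in> {1..m} \<Longrightarrow> u i \<in> carrier_vec (n i)" "\<And>i. i \<in> {1..m} \<Longrightarrow> u' i \<in> carrier_vec (n i)"
    and "v \<in> carrier_vec l" "v' \<in> carrier_vec l"
  shows "stack3 d3 (stack_vec dR (m - 1) (\<lambda>i. u (Suc i))) (u m) v
       - stack3 d3 (stack_vec dR (m - 1) (\<lambda>i. u' (Suc i))) (u' m) v'
     = stack3 d3 (stack_vec dR (m - 1) (\<lambda>i. u (Suc i) - u' (Suc i))) (u m - u' m) (v - v')"
proof -
  have "stack_vec dR (m - 1) (\<lambda>i. u (Suc i)) - stack_vec dR (m - 1) (\<lambda>i. u' (Suc i))
      = stack_vec dR (m - 1) (\<lambda>i. u (Suc i) - u' (Suc i))"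
    by (rule stack_vec_minus) (use assms(1,2) in auto)
  moreover have "stack3 d3 (stack_vec dR (m - 1) (\<lambda>i. u (Suc i))) (u m) v
       - stack3 d3 (stack_vec dR (m - 1) (\<lambda>i. u' (Suc i))) (u' m) v'
     = stack3 d3 (stack_vec dR (m - 1) (\<lambda>i. u (Suc i)) - stack_vec dR (m - 1) (\<lambda>i. u' (Suc i)))
         (u m - u' m) (v - v')"
    by (rule stack3_minus) (use assms m_mem stack_R_carrier in auto)
  ultimately show ?thesis by simp
qed

lemma scalar_prod_stack3_d3:
  assumes "a' \<in> carrier_vec nR" "u' \<in> carrier_vec (n m)" "v' \<in> carrier_vec l"
  shows "stack3 d3 a u v \<bullet> stack3 d3 a' u' v' = a \<bullet> a' + u \<bullet> u' + v \<bullet> v'"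
  by (rule scalar_prod_stack3) (use assms in simp_all)

lemma dlt_eq: "dlt t = stack3 d3 (stack_vec dR (m - 1) (\<lambda>i. dx t (Suc i))) (dx t m) (dy t)"
  unfolding dlt_def w_def wbar_def dx_def dy_def
  by (rule stack3_d3_minus) (simp_all add: x_carrier y_carrier ybar_carrier)

lemma dlt_diff_eq:
  "dlt k - dlt (Suc k) = stack3 d3 (stack_vec dR (m - 1) (\<lambda>i. ddx k (Suc i))) (ddx k m) (ddy k)"
  unfolding dlt_eq ddx_def ddy_def
  by (rule stack3_d3_minus) (simp_all add: dx_carrier dy_carrier)

lemma wbar_diff_eq:
  "wbar k - wbar (Suc k) = stack3 d3 (stack_vec dR (m - 1) (\<lambda>i. dx (Suc k) (Suc i))) (dx (Suc k) m) (dybar k)"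
  unfolding wbar_def dx_def dybar_def
  by (rule stack3_d3_minus) (simp_all add: x_carrier ybar_carrier)

lemma M_mult_dlt: "M *\<^sub>v dlt k = w k - w (Suc k)"
proof -
  note Am = A_carrier_mat[OF m_mem]
  have "(- \<rho>) \<cdot>\<^sub>v (A m *\<^sub>v dx k m) + \<gamma> \<cdot>\<^sub>v dy k = y k - y (Suc k)"
  proof (rule eq_vecI)
    fix r assume "r < dim_vec (y k - y (Suc k))"
    then have r: "r < l" by simp
    show "((- \<rho>) \<cdot>\<^sub>v (A m *\<^sub>v dx k m) + \<gamma> \<cdot>\<^sub>v dy k) $ r = (y k - y (Suc k)) $ r"
      using r carrier_vecD[OF mult_mat_vec_carrier[OF Am dx_carrier[OF m_mem]]] carrier_vecD[OF dy_carrier]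
      by (simp add: index_A_dx[OF m_mem r] index_dy index_y_Suc algebra_simps del: index_mult_mat_vec)
  qed (use Am dx_carrier[OF m_mem] dy_carrier in simp)
  moreover have "w k - w (Suc k) = stack3 d3 (stack_vec dR (m - 1) (\<lambda>i. dx k (Suc i))) (dx k m) (y k - y (Suc k))"
    unfolding w_def dx_def by (rule stack3_d3_minus) (simp_all add: x_carrier y_carrier)
  ultimately show ?thesis
    unfolding dlt_eq using M_mult_stack3 stack_R_carrier dx_carrier[OF m_mem] dy_carrier by simp
qed

lemma M_mult_dlt_minus_dlt_diff: "M *\<^sub>v dlt k - (dlt k - dlt (Suc k)) = wbar k - wbar (Suc k)"
  unfolding M_mult_dlt by (intro eq_vecI) (simp_all add: dlt_def w_def wbar_def)

lemma sum_split_m: "(\<Sum>i\<in>{1..m}. f i) = f m + (\<Sum>i\<in>{1..m-1}. f i)"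
proof -
  have "{1..m} = insert m {1..m-1}" using m_ge_2 by auto
  then show ?thesis using m_ge_2 by simp
qed

lemma sum_A_dx_eq:
  "- (A m *\<^sub>v ddx k m) + (1 / \<rho>) \<cdot>\<^sub>v ddy k = vsum l (\<lambda>i. A i *\<^sub>v dx (Suc k) i) {1..m}"
proof (rule eq_vecI)
  fix r assume "r < dim_vec (vsum l (\<lambda>i. A i *\<^sub>v dx (Suc k) i) {1..m})"
  then have r: "r < l" by simp
  have "vsum l (\<lambda>i. A i *\<^sub>v dx (Suc k) i) {1..m} $ r
      = (\<Sum>i\<in>{1..m}. (A i *\<^sub>v x (Suc k) i) $ r) - (\<Sum>i\<in>{1..m}. (A i *\<^sub>v x (Suc (Suc k)) i) $ r)"
    unfolding index_vsum[OF r] sum_subtractf[symmetric] by (rule sum.cong) (simp_all add: index_A_dx r)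
  also have "\<dots> = (A m *\<^sub>v x (Suc k) m) $ r + AxR (Suc k) $ r
      - ((A m *\<^sub>v x (Suc (Suc k)) m) $ r + AxR (Suc (Suc k)) $ r)"
    unfolding sum_split_m index_AxR[OF r] ..
  finally have "vsum l (\<lambda>i. A i *\<^sub>v dx (Suc k) i) {1..m} $ r
      = (A m *\<^sub>v x (Suc k) m) $ r + AxR (Suc k) $ r - ((A m *\<^sub>v x (Suc (Suc k)) m) $ r + AxR (Suc (Suc k)) $ r)" .
  moreover have "(- (A m *\<^sub>v ddx k m) + (1 / \<rho>) \<cdot>\<^sub>v ddy k) $ r
      = (A m *\<^sub>v x (Suc k) m) $ r + AxR (Suc k) $ r - ((A m *\<^sub>v x (Suc (Suc k)) m) $ r + AxR (Suc (Suc k)) $ r)"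
    using r rho_pos A_carrier_mat[OF m_mem] ddx_carrier[OF m_mem] carrier_vecD[OF dy_carrier]
    by (simp add: index_A_ddx[OF m_mem r] ddy_def index_dy[OF r] field_simps
        del: index_mult_mat_vec)
  ultimately show "(- (A m *\<^sub>v ddx k m) + (1 / \<rho>) \<cdot>\<^sub>v ddy k) $ r
      = vsum l (\<lambda>i. A i *\<^sub>v dx (Suc k) i) {1..m} $ r"
    by simp
qed (use A_carrier_mat[OF m_mem] ddx_carrier[OF m_mem] carrier_vecD[OF ddy_carrier] in simp)

text \<open>The y-block of Q \<Delta> is the sum of A_i (x_i^(k+1) - x_i^(k+2)) (sum_A_dx_eq), so pairing it
  with ybar^k - ybar^(k+1) supplies exactly the dual terms of the blockwise inequalities.\<close>

lemma wbar_diff_mult_Q_nonneg: "(wbar k - wbar (Suc k)) \<bullet> (Q *\<^sub>v (dlt k - dlt (Suc k))) \<ge> 0"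
proof -
  define u where "u i = P (Suc i) *\<^sub>v ddx k (Suc i) - \<rho> \<cdot>\<^sub>v (transpose_mat (A (Suc i)) *\<^sub>v VR k (Suc i))" for i
  define Adx where "Adx i = A i *\<^sub>v dx (Suc k) i" for i
  have Suc_mem: "Suc i \<in> {1..m-1}" "Suc i \<in> {1..m}" if "i < m - 1" for i
    using that by auto
  have u: "u i \<in> carrier_vec (n (Suc i))" if "i < m - 1" for i
    using P_carrier_mat[OF Suc_mem(2)[OF that]] A_carrier_mat[OF Suc_mem(2)[OF that]]
      ddx_carrier[OF Suc_mem(2)[OF that]] VR_carrier
    by (simp add: u_def)
  have Adx: "Adx i \<in> carrier_vec l" if "i \<in> {1..m}" for i
    using A_carrier_mat[OF that] dx_carrier[OF that] by (simp add: Adx_def)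
  have Qxm: "QDelta_xm k \<in> carrier_vec (n m)"
    using A_carrier_mat[OF m_mem] P_carrier_mat[OF m_mem] ddx_carrier[OF m_mem] ddy_carrier
    by (simp add: QDelta_xm_def)
  have "Q *\<^sub>v (dlt k - dlt (Suc k)) = stack3 d3 (stack_vec dR (m - 1) u) (QDelta_xm k) (vsum l Adx {1..m})"
    unfolding dlt_diff_eq Q_mult_stack3[OF stack_R_carrier ddx_carrier[OF m_mem] ddy_carrier]
      G1_mult_ddx Adx_def sum_A_dx_eq[symmetric] QDelta_xm_def u_def ..
  then have "(wbar k - wbar (Suc k)) \<bullet> (Q *\<^sub>v (dlt k - dlt (Suc k)))
      = (\<Sum>i<m - 1. dx (Suc k) (Suc i) \<bullet> u i) + dx (Suc k) m \<bullet> QDelta_xm k + dybar k \<bullet> vsum l Adx {1..m}"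
    unfolding wbar_diff_eq
    using scalar_prod_stack3_d3[OF stack_R_carrier Qxm vsum_carrier] scalar_prod_stack_vec[of "m - 1" u dR, OF u]
    by simp
  also have "dybar k \<bullet> vsum l Adx {1..m} = (\<Sum>i\<in>{1..m}. dybar k \<bullet> Adx i)"
    by (rule scalar_prod_vsum[OF dybar_carrier Adx])
  also have "\<dots> = (\<Sum>i\<in>{1..m}. Adx i \<bullet> dybar k)"
    by (rule sum.cong[OF refl]) (rule comm_scalar_prod[OF dybar_carrier Adx])
  also have "\<dots> = (\<Sum>i<m - 1. Adx (Suc i) \<bullet> dybar k) + Adx m \<bullet> dybar k"
    unfolding sum_split_m by (simp add: sum.atLeast1_atMost_eq)
  finally have "(wbar k - wbar (Suc k)) \<bullet> (Q *\<^sub>v (dlt k - dlt (Suc k)))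
      = (\<Sum>i<m - 1. dx (Suc k) (Suc i) \<bullet> u i + Adx (Suc i) \<bullet> dybar k)
        + (dx (Suc k) m \<bullet> QDelta_xm k + Adx m \<bullet> dybar k)"
    by (simp add: sum.distrib)
  also have "\<dots> \<ge> 0"
    using x_block_ineq[OF Suc_mem(1)] xm_block_ineq unfolding u_def Adx_def
    by (intro add_nonneg_nonneg[OF sum_nonneg]) auto
  finally show ?thesis .
qed

end

theorem lemma4p3:
  fixes m l :: nat and n :: "nat \<Rightarrow> nat"
    and \<theta> :: "nat \<Rightarrow> real vec \<Rightarrow> real" and X :: "nat \<Rightarrow> real vec set"
    and A :: "nat \<Rightarrow> real mat" and b :: "real vec"
    and \<rho> \<gamma> :: real and P :: "nat \<Rightarrow> real mat"
    and x :: "nat \<Rightarrow> nat \<Rightarrow> real vec" and y :: "nat \<Rightarrow> real vec"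
    and k :: nat
  assumes m2: "m \<ge> 2" and l_pos: "l > 0" and n_pos: "\<forall>i\<in>{1..m}. n i > 0"
    and theta_conv: "\<forall>i\<in>{1..m}. convex_fun_vec (n i) (\<theta> i)"
    and X_ne: "\<forall>i\<in>{1..m}. X i \<noteq> {}"
    and X_closed: "\<forall>i\<in>{1..m}. closed_set_vec (n i) (X i)"
    and X_conv: "\<forall>i\<in>{1..m}. convex_set_vec (n i) (X i)"
    and A_dim: "\<forall>i\<in>{1..m}. A i \<in> carrier_mat l (n i)"
    and A_rank: "\<forall>i\<in>{1..m}. vec_space.rank l (A i) = n i"
    and b_dim: "b \<in> carrier_vec l"
    and sol_ne: "\<exists>us. (\<forall>i\<in>{1..m}. us i \<in> X i) \<and> vsum l (\<lambda>i. A i *\<^sub>v us i) {1..m} = b \<and>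
        (\<forall>u. (\<forall>i\<in>{1..m}. u i \<in> X i) \<and> vsum l (\<lambda>i. A i *\<^sub>v u i) {1..m} = b \<longrightarrow>
              (\<Sum>i=1..m. \<theta> i (us i)) \<le> (\<Sum>i=1..m. \<theta> i (u i)))"
    and Wstar_ne: "\<exists>xs ys. (\<forall>i\<in>{1..m}. xs i \<in> X i) \<and> ys \<in> carrier_vec l \<and>
        (\<forall>u v. (\<forall>i\<in>{1..m}. u i \<in> X i) \<and> v \<in> carrier_vec l \<longrightarrow>
           (\<Sum>i=1..m. \<theta> i (u i)) - (\<Sum>i=1..m. \<theta> i (xs i))
           + (\<Sum>i=1..m. (u i - xs i) \<bullet> (- (transpose_mat (A i) *\<^sub>v ys)))
           + (v - ys) \<bullet> (vsum l (\<lambda>i. A i *\<^sub>v xs i) {1..m} - b) \<ge> 0)"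
    and rho_pos: "\<rho> > 0" and gamma_pos: "0 < \<gamma>" and gamma_lt: "\<gamma> < 2"
    and P_pd: "\<forall>i\<in>{1..m}. sym_pos_def (n i) (P i)"
  defines "nR \<equiv> offs (\<lambda>i. n (Suc i)) (m - 1)"
  defines "G1 \<equiv> block_mat (\<lambda>i. n (Suc i)) (m - 1)
             (\<lambda>i j. if i = j then P (Suc i)
                    else (- \<rho>) \<cdot>\<^sub>m (transpose_mat (A (Suc i)) * A (Suc j)))"
  assumes G1_pd: "sym_pos_def nR G1"
  defines "d3 \<equiv> (\<lambda>i::nat. if i = 0 then nR else if i = 1 then n m else l)"
  defines "Q \<equiv> block_mat d3 3 (\<lambda>i j.
             if i = 0 \<and> j = 0 then G1
             else if i = 1 \<and> j = 1 then \<rho> \<cdot>\<^sub>m (transpose_mat (A m) * A m) + P m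
             else if i = 1 \<and> j = 2 then (1 - \<gamma>) \<cdot>\<^sub>m transpose_mat (A m)
             else if i = 2 \<and> j = 1 then - A m
             else if i = 2 \<and> j = 2 then (1 / \<rho>) \<cdot>\<^sub>m 1\<^sub>m l
             else 0\<^sub>m (d3 i) (d3 j))"
  defines "M \<equiv> block_mat d3 3 (\<lambda>i j.
             if i = 0 \<and> j = 0 then 1\<^sub>m nR
             else if i = 1 \<and> j = 1 then 1\<^sub>m (n m)
             else if i = 2 \<and> j = 1 then (- \<rho>) \<cdot>\<^sub>m A m
             else if i = 2 \<and> j = 2 then \<gamma> \<cdot>\<^sub>m 1\<^sub>m l
             else 0\<^sub>m (d3 i) (d3 j))"
  defines "H \<equiv> block_mat d3 3 (\<lambda>i j.
             if i = 0 \<and> j = 0 then G1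
             else if i = 1 \<and> j = 1 then P m + (\<rho> / \<gamma>) \<cdot>\<^sub>m (transpose_mat (A m) * A m)
             else if i = 1 \<and> j = 2 then ((1 - \<gamma>) / \<gamma>) \<cdot>\<^sub>m transpose_mat (A m)
             else if i = 2 \<and> j = 1 then ((1 - \<gamma>) / \<gamma>) \<cdot>\<^sub>m A m
             else if i = 2 \<and> j = 2 then (1 / (\<gamma> * \<rho>)) \<cdot>\<^sub>m 1\<^sub>m l
             else 0\<^sub>m (d3 i) (d3 j))"
  defines "N \<equiv> transpose_mat Q + Q - transpose_mat M * H * M"
  assumes x0: "\<forall>i\<in>{1..m}. x 0 i \<in> X i" and y0: "y 0 \<in> carrier_vec l"
    and x_step: "\<forall>k. \<forall>j\<in>{1..m-1}. x (Suc k) j \<in> X j \<and>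
        (\<forall>z\<in>X j.
           \<theta> j (x (Suc k) j)
             + \<rho> / 2 * sqnorm (A j *\<^sub>v x (Suc k) j + vsum l (\<lambda>i. A i *\<^sub>v x k i) ({1..m} - {j}) - b - (1 / \<rho>) \<cdot>\<^sub>v y k)
             + 1 / 2 * qnorm (P j) (x (Suc k) j - x k j)
           \<le> \<theta> j z
             + \<rho> / 2 * sqnorm (A j *\<^sub>v z + vsum l (\<lambda>i. A i *\<^sub>v x k i) ({1..m} - {j}) - b - (1 / \<rho>) \<cdot>\<^sub>v y k)
             + 1 / 2 * qnorm (P j) (z - x k j))"
    and xm_step: "\<forall>k. x (Suc k) m \<in> X m \<and>
        (\<forall>z\<in>X m.
           \<theta> m (x (Suc k) m)
             + \<rho> / 2 * sqnorm (\<gamma> \<cdot>\<^sub>v vsum l (\<lambda>i. A i *\<^sub>v x (Suc k) i) {1..m-1} + (1 - \<gamma>) \<cdot>\<^sub>v (b - A m *\<^sub>v x k m)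
                                + A m *\<^sub>v x (Suc k) m - b - (1 / \<rho>) \<cdot>\<^sub>v y k)
             + 1 / 2 * qnorm (P m) (x (Suc k) m - x k m)
           \<le> \<theta> m z
             + \<rho> / 2 * sqnorm (\<gamma> \<cdot>\<^sub>v vsum l (\<lambda>i. A i *\<^sub>v x (Suc k) i) {1..m-1} + (1 - \<gamma>) \<cdot>\<^sub>v (b - A m *\<^sub>v x k m)
                                + A m *\<^sub>v z - b - (1 / \<rho>) \<cdot>\<^sub>v y k)
             + 1 / 2 * qnorm (P m) (z - x k m))"
    and y_step: "\<forall>k. y (Suc k) = y k - \<rho> \<cdot>\<^sub>v (\<gamma> \<cdot>\<^sub>v vsum l (\<lambda>i. A i *\<^sub>v x (Suc k) i) {1..m-1}
                      + (1 - \<gamma>) \<cdot>\<^sub>v (b - A m *\<^sub>v x k m) + A m *\<^sub>v x (Suc k) m - b)"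
  defines "xbar \<equiv> (\<lambda>k i. x (Suc k) i)"
  defines "ybar \<equiv> (\<lambda>k. y k - \<rho> \<cdot>\<^sub>v (vsum l (\<lambda>i. A i *\<^sub>v x (Suc k) i) {1..m-1} + A m *\<^sub>v x k m - b))"
  defines "wv \<equiv> (\<lambda>k. stack_vec d3 3 (\<lambda>t. if t = 0 then stack_vec (\<lambda>i. n (Suc i)) (m - 1) (\<lambda>i. x k (Suc i))
                                          else if t = 1 then x k m else y k))"
  defines "wbar \<equiv> (\<lambda>k. stack_vec d3 3 (\<lambda>t. if t = 0 then stack_vec (\<lambda>i. n (Suc i)) (m - 1) (\<lambda>i. xbar k (Suc i))
                                          else if t = 1 then xbar k m else ybar k))"
  defines "dlt \<equiv> (\<lambda>k. wv k - wbar k)"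
  shows "(dlt k) \<bullet> ((transpose_mat M * H * M) *\<^sub>v (dlt k - dlt (Suc k)))
           \<ge> 1 / 2 * qnorm (transpose_mat Q + Q) (dlt k - dlt (Suc k))"
proof -
  interpret L: lgadmm m l n \<theta> X A b \<rho> \<gamma> P x y
    by unfold_locales (fact m2 theta_conv X_conv A_dim b_dim rho_pos gamma_pos P_pd x0 y0 x_step xm_step y_step)+
  have nR: "nR = L.nR"
    unfolding nR_def L.nR_def ..
  have d3: "d3 = L.d3" and G1: "G1 = L.G1"
    unfolding d3_def L.d3_def G1_def L.G1_def nR by simp_all
  have Q: "Q = L.Q"
    unfolding Q_def L.Q_def L.Qblk_def[abs_def] d3 G1 ..
  have M: "M = L.M"
    unfolding M_def L.M_def L.Mblk_def[abs_def] d3 nR ..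
  have H: "H = L.H"
    unfolding H_def L.H_def L.Hblk_def[abs_def] d3 G1 ..
  have dlt: "dlt = L.dlt"
    unfolding dlt_def L.dlt_def[abs_def] wv_def L.w_def[abs_def] wbar_def L.wbar_def[abs_def]
      stack3_def xbar_def ybar_def L.ybar_def[abs_def] d3 ..
  have "L.H *\<^sub>v (L.M *\<^sub>v (L.dlt k - L.dlt (Suc k))) = L.Q *\<^sub>v (L.dlt k - L.dlt (Suc k))"
    unfolding L.dlt_diff_eq
    by (rule L.H_M_mult_stack3[OF L.stack_R_carrier L.ddx_carrier[OF L.m_mem] L.ddy_carrier])
  moreover have "(L.M *\<^sub>v L.dlt k - (L.dlt k - L.dlt (Suc k))) \<bullet> (L.Q *\<^sub>v (L.dlt k - L.dlt (Suc k))) \<ge> 0"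
    unfolding L.M_mult_dlt_minus_dlt_diff by (rule L.wbar_diff_mult_Q_nonneg)
  ultimately show ?thesis
    unfolding Q M H dlt
    by (intro scalar_prod_MtHM_ge_half_qnorm[where N = "offs L.d3 3"])
      (simp_all add: L.Q_def L.M_def L.H_def L.dlt_def L.w_def L.wbar_def)
qed

end
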